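(* Consider a state-dependent discrete memoryless channel $W_{Y,Z|X,S}$ with finite alphabets, i.i.d. state distribution $Q_S$, innocent symbol $x_0$, and strictly causal channel state information available only at the transmitter (encoder $X_i=f_i(M,S^{i-1})$, decoder $Y^n\mapsto\hat M$). Let $\mathcal D$ be the set of joint pmfs $P_{S,V,X,Y,Z}=Q_SP_VP_{X|V}W_{Y,Z|X,S}$, where $V$ is an auxiliary random variable on a finite alphabet with $|\mathcal V|\le|\mathcal X|$, such that $P_Z=Q_0$ and $\mathbb I(X;Y)\ge\mathbb I(V;Z)$. Let $\mathcal S=\{R\ge0:\exists P\in\mathcal D\text{ with }R\le\mathbb I(X;Y)\}$. Then the covert capacity satisfies $C_{\mathrm{SC\text{-}T}}\le\max\{x:x\in\mathcal S\}$.
   Context: Finite alphabets $\mathcal S,\mathcal X,\mathcal Y,\mathcal Z$. The channel has transition pmf $W_{Y,Z|X,S}$: input $X$, state $S$, output $Y$ at the legitimate receiver and output $Z$ at an adversary (warden). The state sequence $S^n$ is i.i.d. with pmf $Q_S$ and independent of the message; neither the legitimate receiver nor the warden knows the state. $x_0\in\mathcal X$ is a fixed innocent symbol, and $Q_0(z)=\sum_{s}Q_S(s)W_{Z|X,S}(z|x_0,s)$, assumed to have full support on $\mathcal Z$. A $(2^{nR},n)$ code consists of a message $M$ uniform on $\{1,\dots,2^{nR}\}$, an encoder and a decoder of the type specified. $P_{Z^n}$ denotes the distribution of the warden's output induced by the code. A rate $R$ is achievable if there is a sequence of $(2^{nR},n)$ codes with $\mathbb P(\hat M\ne M)\to 0$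 and $\mathbb D(P_{Z^n}\|Q_0^{\otimes n})\to 0$ as $n\to\infty$; the covert capacity is the supremum of achievable rates. Mutual informations are computed under the indicated joint pmf. *)

theory Defs
  imports Complex_Main
begin

definition is_pmf_on :: "'a set \<Rightarrow> ('a \<Rightarrow> real) \<Rightarrow> bool" where
  "is_pmf_on A p \<longleftrightarrow> (\<forall>a\<in>A. 0 \<le> p a) \<and> (\<Sum>a\<in>A. p a) = 1"

definition mutual_info :: "'a set \<Rightarrow> 'b set \<Rightarrow> ('a \<Rightarrow> 'b \<Rightarrow> real) \<Rightarrow> real" where
  "mutual_info A B p =
     (\<Sum>a\<in>A. \<Sum>b\<in>B. if p a b = 0 then 0
        else p a b * log 2 (p a b / ((\<Sum>b'\<in>B. p a b') * (\<Sum>a'\<in>A. p a' b))))"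

definition kl_div :: "'a set \<Rightarrow> ('a \<Rightarrow> real) \<Rightarrow> ('a \<Rightarrow> real) \<Rightarrow> real" where
  "kl_div A p q = (\<Sum>a\<in>A. if p a = 0 then 0 else p a * log 2 (p a / q a))"

text \<open>W x s y z = W_{Y,Z|X,S}(y,z|x,s); Q s = Q_S(s).\<close>

definition Q0 :: "('x \<Rightarrow> 's \<Rightarrow> 'y \<Rightarrow> 'z \<Rightarrow> real) \<Rightarrow> ('s \<Rightarrow> real) \<Rightarrow> 'x \<Rightarrow> 'z \<Rightarrow> real" where
  "Q0 W Q x0 z = (\<Sum>s\<in>UNIV. Q s * (\<Sum>y\<in>UNIV. W x0 s y z))"

definition seqs :: "nat \<Rightarrow> 'a list set" where
  "seqs n = {xs. length xs = n}"

definition num_msgs :: "real \<Rightarrow> nat \<Rightarrow> nat" where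
  "num_msgs R n = nat \<lceil>2 powr (real n * R)\<rceil>"

text \<open>Strictly causal encoder at blocklength n: enc i m ss is X_{i+1} (0-indexed i < n) as a function
  of the message m and the past states ss = S^{i} (the first i states).
  Joint probability of (M, S^n, Y^n, Z^n) = (m, ss, ys, zs), with M uniform on {1..N}.\<close>
definition code_joint ::
  "('x \<Rightarrow> 's \<Rightarrow> 'y \<Rightarrow> 'z \<Rightarrow> real) \<Rightarrow> ('s \<Rightarrow> real) \<Rightarrow> nat \<Rightarrow> nat
   \<Rightarrow> (nat \<Rightarrow> nat \<Rightarrow> 's list \<Rightarrow> 'x) \<Rightarrow> nat \<Rightarrow> 's list \<Rightarrow> 'y list \<Rightarrow> 'z list \<Rightarrow> real" where
  "code_joint W Q N n enc m ss ys zs =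
     (1 / real N) * (\<Prod>i<n. Q (ss ! i) * W (enc i m (take i ss)) (ss ! i) (ys ! i) (zs ! i))"

definition error_prob ::
  "('x \<Rightarrow> 's \<Rightarrow> 'y \<Rightarrow> 'z \<Rightarrow> real) \<Rightarrow> ('s \<Rightarrow> real) \<Rightarrow> nat \<Rightarrow> nat
   \<Rightarrow> (nat \<Rightarrow> nat \<Rightarrow> 's list \<Rightarrow> 'x) \<Rightarrow> ('y list \<Rightarrow> nat) \<Rightarrow> real" where
  "error_prob W Q N n enc dec =
     (\<Sum>m\<in>{1..N}. \<Sum>ss\<in>seqs n. \<Sum>ys\<in>seqs n. \<Sum>zs\<in>seqs n.
        if dec ys \<noteq> m then code_joint W Q N n enc m ss ys zs else 0)"

definition warden_dist ::
  "('x \<Rightarrow> 's \<Rightarrow> 'y \<Rightarrow> 'z \<Rightarrow> real) \<Rightarrow> ('s \<Rightarrow> real) \<Rightarrow> nat \<Rightarrow> nat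
   \<Rightarrow> (nat \<Rightarrow> nat \<Rightarrow> 's list \<Rightarrow> 'x) \<Rightarrow> 'z list \<Rightarrow> real" where
  "warden_dist W Q N n enc zs =
     (\<Sum>m\<in>{1..N}. \<Sum>ss\<in>seqs n. \<Sum>ys\<in>seqs n. code_joint W Q N n enc m ss ys zs)"

definition Q0_prod ::
  "('x \<Rightarrow> 's \<Rightarrow> 'y \<Rightarrow> 'z \<Rightarrow> real) \<Rightarrow> ('s \<Rightarrow> real) \<Rightarrow> 'x \<Rightarrow> nat \<Rightarrow> 'z list \<Rightarrow> real" where
  "Q0_prod W Q x0 n zs = (\<Prod>i<n. Q0 W Q x0 (zs ! i))"

definition covert_achievable_SCT ::
  "('x::finite \<Rightarrow> 's::finite \<Rightarrow> 'y::finite \<Rightarrow> 'z::finite \<Rightarrow> real) \<Rightarrow> ('s \<Rightarrow> real) \<Rightarrow> 'x \<Rightarrow> real \<Rightarrow> bool" where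
  "covert_achievable_SCT W Q x0 R \<longleftrightarrow> 0 \<le> R \<and>
     (\<exists>(enc :: nat \<Rightarrow> nat \<Rightarrow> nat \<Rightarrow> 's list \<Rightarrow> 'x) (dec :: nat \<Rightarrow> 'y list \<Rightarrow> nat).
        (\<lambda>n. error_prob W Q (num_msgs R n) n (enc n) (dec n)) \<longlonglongrightarrow> 0 \<and>
        (\<lambda>n. kl_div (seqs n) (warden_dist W Q (num_msgs R n) n (enc n)) (Q0_prod W Q x0 n))
           \<longlonglongrightarrow> 0)"

definition covert_capacity_SCT ::
  "('x::finite \<Rightarrow> 's::finite \<Rightarrow> 'y::finite \<Rightarrow> 'z::finite \<Rightarrow> real) \<Rightarrow> ('s \<Rightarrow> real) \<Rightarrow> 'x \<Rightarrow> real" where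
  "covert_capacity_SCT W Q x0 = Sup {R. covert_achievable_SCT W Q x0 R}"

text \<open>Auxiliary alphabet: V ranges over {..<CARD('x)} (any alphabet with |V| \<le> |X| embeds into it).
  PV is P_V, PXV v x is P_{X|V}(x|v). The joint pmf is Q_S(s) P_V(v) P_{X|V}(x|v) W(y,z|x,s).\<close>
definition joint_SVXYZ ::
  "('x \<Rightarrow> 's \<Rightarrow> 'y \<Rightarrow> 'z \<Rightarrow> real) \<Rightarrow> ('s \<Rightarrow> real) \<Rightarrow> (nat \<Rightarrow> real) \<Rightarrow> (nat \<Rightarrow> 'x \<Rightarrow> real)
   \<Rightarrow> 's \<Rightarrow> nat \<Rightarrow> 'x \<Rightarrow> 'y \<Rightarrow> 'z \<Rightarrow> real" where
  "joint_SVXYZ W Q PV PXV s v x y z = Q s * PV v * PXV v x * W x s y z"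

definition aux_alph :: "'x::finite itself \<Rightarrow> nat set" where
  "aux_alph (t :: 'x itself) = {..<card (UNIV :: 'x set)}"

definition P_XY where
  "P_XY W Q PV PXV x y =
     (\<Sum>s\<in>UNIV. \<Sum>v\<in>aux_alph TYPE('x::finite). \<Sum>z\<in>UNIV. joint_SVXYZ W Q PV PXV s v (x::'x) y z)"

definition P_VZ where
  "P_VZ W Q PV (PXV :: nat \<Rightarrow> 'x::finite \<Rightarrow> real) v z =
     (\<Sum>s\<in>UNIV. \<Sum>x\<in>UNIV. \<Sum>y\<in>UNIV. joint_SVXYZ W Q PV PXV s v x y z)"

definition P_Z where
  "P_Z W Q PV (PXV :: nat \<Rightarrow> 'x::finite \<Rightarrow> real) z =
     (\<Sum>v\<in>aux_alph TYPE('x). P_VZ W Q PV PXV v z)"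

definition in_D_SCT ::
  "('x::finite \<Rightarrow> 's::finite \<Rightarrow> 'y::finite \<Rightarrow> 'z::finite \<Rightarrow> real) \<Rightarrow> ('s \<Rightarrow> real) \<Rightarrow> 'x
   \<Rightarrow> (nat \<Rightarrow> real) \<Rightarrow> (nat \<Rightarrow> 'x \<Rightarrow> real) \<Rightarrow> bool" where
  "in_D_SCT W Q x0 PV PXV \<longleftrightarrow>
     is_pmf_on (aux_alph TYPE('x)) PV \<and>
     (\<forall>v\<in>aux_alph TYPE('x). is_pmf_on UNIV (PXV v)) \<and>
     (\<forall>z. P_Z W Q PV PXV z = Q0 W Q x0 z) \<and>
     mutual_info UNIV UNIV (P_XY W Q PV PXV) \<ge> mutual_info (aux_alph TYPE('x)) UNIV (P_VZ W Q PV PXV)"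

definition rate_set_SCT ::
  "('x::finite \<Rightarrow> 's::finite \<Rightarrow> 'y::finite \<Rightarrow> 'z::finite \<Rightarrow> real) \<Rightarrow> ('s \<Rightarrow> real) \<Rightarrow> 'x \<Rightarrow> real set" where
  "rate_set_SCT W Q x0 = {R. 0 \<le> R \<and> (\<exists>PV PXV. in_D_SCT W Q x0 PV PXV \<and>
       R \<le> mutual_info UNIV UNIV (P_XY W Q PV PXV))}"

end

theory Submission
  imports Defs "HOL-Analysis.Analysis" "HOL-Real_Asymp.Real_Asymp"
begin

text \<open>
  Since the state is i.i.d. and only its past is known to the encoder, given the past the pair \<open>(Y_k, Z_k)\<close>
  is produced from \<open>X_k\<close> by the state-averaged channels \<open>W_Y\<close> and \<open>W_Z\<close>. Hence, for a code with \<open>N\<close>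
  messages and blocklength \<open>n\<close>, Fano's inequality in log-sum form and the chain rule for divergence give
  \<open>(1 - P_e) log N - 6 \<le> n I(p)\<close>, where \<open>p\<close> is the input distribution averaged over time and messages and the
  reference output distribution is the \<open>W_Y\<close>-output of \<open>p\<close> mixed with a little of the uniform one.
  Since the divergence of a coordinate marginal is at most that of the whole word, covertness forces the
  \<open>W_Z\<close>-output of \<open>p\<close> to tend to \<open>Q_0\<close>. By compactness of the simplex and continuity of \<open>I\<close>, a limit point of
  these averaged inputs is a covert input distribution \<open>p\<close> with \<open>R \<le> I(p)\<close>.

  Conversely the rate set is \<open>{R \<ge> 0. R \<le> I(p) for a covert p}\<close>: the \<open>X\<close>-marginal of every element of the
  set \<open>D\<close> is covert, and every covert \<open>p\<close> arises with a constant auxiliary variable. Its maximum exists since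
  the covert input distributions form a compact set.
\<close>

section \<open>Sequences of fixed length\<close>

lemma in_seqs [simp]: "xs \<in> seqs n \<longleftrightarrow> length xs = n"
  by (simp add: seqs_def)

lemma seqs_0: "seqs 0 = {[]}"
  by (auto simp: seqs_def)

lemma finite_seqs [simp]: "finite (seqs n :: 'a::finite list set)"
proof -
  have "seqs n = {xs. set xs \<subseteq> (UNIV :: 'a set) \<and> length xs = n}"
    by (auto simp: seqs_def)
  then show ?thesis
    using finite_lists_length_eq[of "UNIV :: 'a set" n] by simp
qed

lemma seqs_Suc: "seqs (Suc n) = (\<lambda>(xs, a). xs @ [a]) ` (seqs n \<times> UNIV)"
proof (intro set_eqI iffI)
  fix xs :: "'a list"
  assume "xs \<in> seqs (Suc n)"
  then have "xs \<noteq> []" and "butlast xs \<in> seqs n"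
    by (auto simp: seqs_def)
  then show "xs \<in> (\<lambda>(xs, a). xs @ [a]) ` (seqs n \<times> UNIV)"
    by (intro image_eqI[where x = "(butlast xs, last xs)"]) auto
qed (auto simp: seqs_def)

lemma sum_seqs_Suc:
  fixes g :: "'a::finite list \<Rightarrow> 'b::comm_monoid_add"
  shows "(\<Sum>xs\<in>seqs (Suc n). g xs) = (\<Sum>xs\<in>seqs n. \<Sum>a\<in>UNIV. g (xs @ [a]))"
proof -
  have "inj_on (\<lambda>(xs, a). xs @ [a]) (seqs n \<times> (UNIV :: 'a set))"
    by (auto simp: inj_on_def)
  then have "(\<Sum>xs\<in>seqs (Suc n). g xs) = (\<Sum>(xs, a)\<in>seqs n \<times> UNIV. g (xs @ [a]))"
    unfolding seqs_Suc by (subst sum.reindex) (simp_all add: case_prod_beta)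
  then show ?thesis
    by (simp add: sum.cartesian_product)
qed

lemma sum_seqs_prod:
  fixes f :: "nat \<Rightarrow> 'a::finite \<Rightarrow> 'b::comm_semiring_1"
  shows "(\<Sum>xs\<in>seqs n. \<Prod>i<n. f i (xs ! i)) = (\<Prod>i<n. \<Sum>a\<in>UNIV. f i a)"
proof (induction n)
  case 0
  then show ?case by (simp add: seqs_0)
next
  case (Suc n)
  have "(\<Sum>xs\<in>seqs (Suc n). \<Prod>i<Suc n. f i (xs ! i))
      = (\<Sum>xs\<in>seqs n. \<Sum>a\<in>UNIV. (\<Prod>i<n. f i (xs ! i)) * f n a)"
    unfolding sum_seqs_Suc
    by (intro sum.cong refl) (auto simp: lessThan_Suc nth_append mult.commute intro!: prod.cong)
  also have "\<dots> = (\<Sum>xs\<in>seqs n. \<Prod>i<n. f i (xs ! i)) * (\<Sum>a\<in>UNIV. f n a)"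
    by (rule sum_product[symmetric])
  finally show ?case
    using Suc by (simp add: lessThan_Suc mult.commute)
qed

definition iid :: "('a \<Rightarrow> real) \<Rightarrow> nat \<Rightarrow> 'a list \<Rightarrow> real" where
  "iid q n xs = (\<Prod>i<n. q (xs ! i))"

definition marginal :: "nat \<Rightarrow> ('a list \<Rightarrow> real) \<Rightarrow> nat \<Rightarrow> 'a \<Rightarrow> real" where
  "marginal n P k a = (\<Sum>xs\<in>{xs \<in> seqs n. xs ! k = a}. P xs)"

lemma marginal_eq:
  "marginal n P k a = (\<Sum>xs\<in>seqs n. if xs ! k = a then P xs else 0)"
  for P :: "'a::finite list \<Rightarrow> real"
  unfolding marginal_def by (rule sum.inter_filter) simp

lemma iid_pos: "(\<And>a. 0 < q a) \<Longrightarrow> 0 < iid q n xs"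
  unfolding iid_def by (intro prod_pos) simp

lemma iid_snoc: "length xs = n \<Longrightarrow> iid q (Suc n) (xs @ [a]) = iid q n xs * q a"
  unfolding iid_def by (auto simp: lessThan_Suc nth_append intro!: prod.cong)

lemma sum_iid: "sum q UNIV = 1 \<Longrightarrow> (\<Sum>xs\<in>seqs n. iid q n xs) = (1 :: real)"
  for q :: "'a::finite \<Rightarrow> real"
  unfolding iid_def using sum_seqs_prod[of "\<lambda>i. q" n] by simp

lemma marginal_iid:
  fixes q :: "'a::finite \<Rightarrow> real"
  assumes "k < n" and "sum q UNIV = 1"
  shows "marginal n (iid q n) k a = q a"
proof -
  define g where "g = (\<lambda>i b. if i = k then (if b = a then q b else 0) else q b)"
  have "(if xs ! k = a then iid q n xs else 0) = (\<Prod>i<n. g i (xs ! i))" for xs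
    using \<open>k < n\<close> by (auto simp: iid_def g_def intro!: prod.cong prod_zero)
  then have "marginal n (iid q n) k a = (\<Prod>i<n. \<Sum>b\<in>UNIV. g i b)"
    by (simp add: marginal_eq sum_seqs_prod)
  also have "\<dots> = (\<Prod>i<n. if i = k then q a else 1)"
    by (intro prod.cong refl) (simp add: g_def assms(2))
  also have "\<dots> = q a"
    using \<open>k < n\<close> by simp
  finally show ?thesis .
qed

definition sum_seqs3 :: "nat \<Rightarrow> ('a::finite list \<Rightarrow> 'b::finite list \<Rightarrow> 'c::finite list \<Rightarrow> real) \<Rightarrow> real"
  where "sum_seqs3 k g = (\<Sum>ss\<in>seqs k. \<Sum>ys\<in>seqs k. \<Sum>zs\<in>seqs k. g ss ys zs)"

lemma sum_seqs3_0: "sum_seqs3 0 g = g [] [] []"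
  by (simp add: sum_seqs3_def seqs_0)

lemma sum_seqs3_Suc:
  "sum_seqs3 (Suc k) g
    = sum_seqs3 k (\<lambda>ss ys zs. \<Sum>s\<in>UNIV. \<Sum>y\<in>UNIV. \<Sum>z\<in>UNIV. g (ss @ [s]) (ys @ [y]) (zs @ [z]))"
proof -
  have "sum_seqs3 (Suc k) g = (\<Sum>ss\<in>seqs k. \<Sum>s\<in>UNIV. \<Sum>ys\<in>seqs k. \<Sum>y\<in>UNIV. \<Sum>zs\<in>seqs k. \<Sum>z\<in>UNIV.
      g (ss @ [s]) (ys @ [y]) (zs @ [z]))"
    unfolding sum_seqs3_def sum_seqs_Suc ..
  also have "\<dots> = (\<Sum>ss\<in>seqs k. \<Sum>s\<in>UNIV. \<Sum>ys\<in>seqs k. \<Sum>zs\<in>seqs k. \<Sum>y\<in>UNIV. \<Sum>z\<in>UNIV.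
      g (ss @ [s]) (ys @ [y]) (zs @ [z]))"
    by (intro sum.cong refl, rule sum.swap)
  also have "\<dots> = (\<Sum>ss\<in>seqs k. \<Sum>ys\<in>seqs k. \<Sum>s\<in>UNIV. \<Sum>zs\<in>seqs k. \<Sum>y\<in>UNIV. \<Sum>z\<in>UNIV.
      g (ss @ [s]) (ys @ [y]) (zs @ [z]))"
    by (intro sum.cong refl, rule sum.swap)
  also have "\<dots> = (\<Sum>ss\<in>seqs k. \<Sum>ys\<in>seqs k. \<Sum>zs\<in>seqs k. \<Sum>s\<in>UNIV. \<Sum>y\<in>UNIV. \<Sum>z\<in>UNIV.
      g (ss @ [s]) (ys @ [y]) (zs @ [z]))"
    by (intro sum.cong refl, rule sum.swap)
  finally show ?thesis
    unfolding sum_seqs3_def .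
qed

lemma sum_seqs3_cong:
  "(\<And>ss ys zs. length ss = k \<Longrightarrow> length ys = k \<Longrightarrow> length zs = k \<Longrightarrow> g ss ys zs = h ss ys zs)
    \<Longrightarrow> sum_seqs3 k g = sum_seqs3 k h"
  unfolding sum_seqs3_def by (intro sum.cong refl) auto

lemma sum_seqs3_sum:
  "finite A \<Longrightarrow> sum_seqs3 k (\<lambda>ss ys zs. \<Sum>a\<in>A. g a ss ys zs) = (\<Sum>a\<in>A. sum_seqs3 k (g a))"
  unfolding sum_seqs3_def
  by (subst sum.swap, rule sum.cong[OF refl], subst sum.swap, rule sum.cong[OF refl], subst sum.swap, rule refl)

section \<open>Log-sum, Fano and Hellinger-type inequalities\<close>

lemma mult_ln_div_ge:
  fixes x z :: real
  assumes "0 \<le> x" and "0 < z"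
  shows "x - z \<le> x * ln (x / z)"
proof (cases "x = 0")
  case False
  then have "0 < x"
    using assms(1) by simp
  have "ln (z / x) \<le> z / x - 1"
    using \<open>0 < x\<close> assms(2) by (intro ln_le_minus_one) simp
  then have "x * ln (z / x) \<le> z - x"
    using \<open>0 < x\<close> by (simp add: field_simps)
  moreover have "ln (z / x) = - ln (x / z)"
    using \<open>0 < x\<close> assms(2) by (simp add: ln_div)
  ultimately show ?thesis
    by simp
qed (use assms in simp)

lemma ln_sum_inequality:
  fixes a b :: "'i \<Rightarrow> real"
  assumes "finite S" and a: "\<And>s. s \<in> S \<Longrightarrow> 0 \<le> a s" and b: "\<And>s. s \<in> S \<Longrightarrow> 0 \<le> b s"
    and ab: "\<And>s. s \<in> S \<Longrightarrow> b s = 0 \<Longrightarrow> a s = 0"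
  shows "sum a S * ln (sum a S / sum b S) \<le> (\<Sum>s\<in>S. a s * ln (a s / b s))"
proof (cases "sum a S = 0")
  case True
  then show ?thesis
    using a by (simp add: sum_nonneg_eq_0_iff[OF \<open>finite S\<close>])
next
  case False
  define c where "c = sum a S / sum b S"
  obtain s0 where "s0 \<in> S" and "a s0 \<noteq> 0"
    using False by (meson sum.neutral)
  then have "0 < b s0"
    using ab b by (force simp: less_le)
  then have "0 < sum b S"
    using b \<open>finite S\<close> \<open>s0 \<in> S\<close> by (metis sum_pos2)
  moreover have "0 < sum a S"
    using False a sum_nonneg[of S a] by force
  ultimately have "0 < c"
    by (simp add: c_def)
  have pointwise: "a s - c * b s \<le> a s * ln (a s / b s) - a s * ln c" if "s \<in> S" for s
  proof (cases "a s = 0")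
    case False
    then have "0 < a s" and "0 < b s"
      using a b ab that by (auto simp: less_le)
    then have "ln (a s / (c * b s)) = ln (a s / b s) - ln c"
      using \<open>0 < c\<close> by (simp add: ln_div ln_mult)
    moreover have "a s - c * b s \<le> a s * ln (a s / (c * b s))"
      using \<open>0 < a s\<close> \<open>0 < b s\<close> \<open>0 < c\<close> by (intro mult_ln_div_ge) auto
    ultimately show ?thesis
      by (simp add: right_diff_distrib)
  qed (use b that \<open>0 < c\<close> in simp)
  have "0 = sum a S - c * sum b S"
    using \<open>0 < sum b S\<close> by (simp add: c_def)
  also have "\<dots> = (\<Sum>s\<in>S. a s - c * b s)"
    by (simp add: sum_subtractf sum_distrib_left)
  also have "\<dots> \<le> (\<Sum>s\<in>S. a s * ln (a s / b s) - a s * ln c)"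
    by (intro sum_mono pointwise)
  finally show ?thesis
    by (simp add: sum_subtractf sum_distrib_right[symmetric] c_def)
qed

lemma log_sum_inequality:
  fixes a b :: "'i \<Rightarrow> real"
  assumes "1 < c" and "finite S" and "\<And>s. s \<in> S \<Longrightarrow> 0 \<le> a s" and "\<And>s. s \<in> S \<Longrightarrow> 0 \<le> b s"
    and "\<And>s. s \<in> S \<Longrightarrow> b s = 0 \<Longrightarrow> a s = 0"
  shows "sum a S * log c (sum a S / sum b S) \<le> (\<Sum>s\<in>S. a s * log c (a s / b s))"
proof -
  have "sum a S * ln (sum a S / sum b S) / ln c \<le> (\<Sum>s\<in>S. a s * ln (a s / b s)) / ln c"
    using ln_sum_inequality[OF assms(2-)] \<open>1 < c\<close> by (simp add: divide_right_mono)
  then show ?thesis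
    by (simp add: log_def sum_divide_distrib)
qed

lemma kl_div_eq: "kl_div A p q = (\<Sum>a\<in>A. p a * log 2 (p a / q a))"
  unfolding kl_div_def by (intro sum.cong) auto

lemma mult_log2_ge_minus_two:
  fixes t :: real
  assumes "0 \<le> t"
  shows "-2 \<le> t * log 2 t"
proof (cases "t = 0")
  case False
  then have "0 < t"
    using assms by simp
  have "ln (1 / t) \<le> 1 / t - 1"
    using \<open>0 < t\<close> by (intro ln_le_minus_one) simp
  then have "t - 1 \<le> t * ln t"
    using \<open>0 < t\<close> by (simp add: ln_div field_simps)
  then have "(t - 1) / ln 2 \<le> t * log 2 t"
    by (simp add: log_def divide_right_mono)
  moreover have "-2 \<le> (t - 1) / ln 2"
    using \<open>0 < t\<close> ln2_ge_two_thirds by (simp add: field_simps)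
  ultimately show ?thesis
    by linarith
qed simp

lemma mult_log2_ratio_ge:
  fixes s \<beta> B :: real
  assumes "0 \<le> s" and "0 < s \<Longrightarrow> 0 < \<beta>" and "\<beta> \<le> B"
  shows "s * log 2 (1 / B) - 2 \<le> s * log 2 (s / \<beta>)"
proof (cases "s = 0")
  case False
  then have "0 < s" and "0 < \<beta>"
    using assms by auto
  then have "log 2 (1 / B) \<le> log 2 (1 / \<beta>)"
    using \<open>\<beta> \<le> B\<close> by (simp add: divide_left_mono)
  then have "s * log 2 (1 / B) \<le> s * log 2 (1 / \<beta>)"
    using \<open>0 < s\<close> by (simp add: mult_left_mono)
  moreover have "s * log 2 (s / \<beta>) = s * log 2 s + s * log 2 (1 / \<beta>)"
    using \<open>0 < s\<close> \<open>0 < \<beta>\<close> by (simp add: log_divide algebra_simps)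
  ultimately show ?thesis
    using mult_log2_ge_minus_two[OF assms(1)] by linarith
qed simp

lemma fano_log_sum_bound:
  fixes a b :: "'i \<Rightarrow> real"
  assumes "finite G" and "C \<subseteq> G" and a: "\<And>i. i \<in> G \<Longrightarrow> 0 \<le> a i" and b: "\<And>i. i \<in> G \<Longrightarrow> 0 < b i"
    and "sum a G = 1" and "sum b G = 1" and "sum b C \<le> 1 / N" and "0 < N"
  shows "sum a C * log 2 N - 4 \<le> (\<Sum>i\<in>G. a i * log 2 (a i / b i))"
proof -
  define E where "E = G - C"
  have "finite C" and "finite E" and "C \<subseteq> G" and "E \<subseteq> G"
    using assms(1,2) finite_subset unfolding E_def by auto
  have split: "sum f G = sum f C + sum f E" for f :: "'i \<Rightarrow> real"
    using sum.subset_diff[OF \<open>C \<subseteq> G\<close> \<open>finite G\<close>] unfolding E_def by (simp add: add.commute)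
  have ab: "a i = 0" if "i \<in> G" "b i = 0" for i
    using b[OF \<open>i \<in> G\<close>] \<open>b i = 0\<close> by simp
  have pos: "0 < sum b D" if "D \<subseteq> G" "finite D" "0 < sum a D" for D
    using that b by (intro sum_pos) auto
  have "0 \<le> sum b C"
    using b \<open>C \<subseteq> G\<close> by (intro sum_nonneg) (auto intro: less_imp_le)
  then have "sum b E \<le> 1"
    using split[of b] \<open>sum b G = 1\<close> by linarith
  have "sum a C * log 2 N - 2 \<le> sum a C * log 2 (sum a C / sum b C)"
    using mult_log2_ratio_ge[of "sum a C" "sum b C" "1 / N"] pos[OF \<open>C \<subseteq> G\<close> \<open>finite C\<close>]
      a \<open>C \<subseteq> G\<close> \<open>sum b C \<le> 1 / N\<close> \<open>0 < N\<close> by (simp add: subset_iff sum_nonneg)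
  also have "\<dots> \<le> (\<Sum>i\<in>C. a i * log 2 (a i / b i))"
    using a less_imp_le[OF b] ab \<open>C \<subseteq> G\<close> by (intro log_sum_inequality \<open>finite C\<close>) (auto intro: less_imp_le)
  finally have "sum a C * log 2 N - 2 \<le> (\<Sum>i\<in>C. a i * log 2 (a i / b i))" .
  moreover have "-2 \<le> sum a E * log 2 (sum a E / sum b E)"
    using mult_log2_ratio_ge[of "sum a E" "sum b E" 1] pos[OF \<open>E \<subseteq> G\<close> \<open>finite E\<close>]
      a \<open>E \<subseteq> G\<close> \<open>sum b E \<le> 1\<close> by (simp add: subset_iff sum_nonneg)
  moreover have "\<dots> \<le> (\<Sum>i\<in>E. a i * log 2 (a i / b i))"
    using a less_imp_le[OF b] ab \<open>E \<subseteq> G\<close> by (intro log_sum_inequality \<open>finite E\<close>) (auto intro: less_imp_le)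
  ultimately show ?thesis
    using split[of "\<lambda>i. a i * log 2 (a i / b i)"] by linarith
qed

lemma sum_decoded_le:
  fixes q :: "'a \<Rightarrow> real" and dec :: "'a \<Rightarrow> nat"
  assumes "finite A" and "\<And>a. a \<in> A \<Longrightarrow> 0 \<le> q a"
  shows "(\<Sum>m\<in>{1..N}. \<Sum>a\<in>A. if dec a = m then q a else 0) \<le> sum q A"
proof -
  have "(\<Sum>m\<in>{1..N}. \<Sum>a\<in>A. if dec a = m then q a else 0) = (\<Sum>a\<in>A. if dec a \<in> {1..N} then q a else 0)"
    by (subst sum.swap) simp
  also have "\<dots> \<le> sum q A"
    using assms(2) by (intro sum_mono) auto
  finally show ?thesis .
qed

lemma mult_log2_one_plus_inverse_le:
  fixes x :: real
  assumes "0 < x"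
  shows "x * log 2 (1 + 1 / x) \<le> 2"
proof -
  have "ln (1 + 1 / x) \<le> 1 / x"
    using assms by (intro ln_add_one_self_le_self) simp
  then have "log 2 (1 + 1 / x) \<le> (1 / x) / ln 2"
    unfolding log_def by (rule divide_right_mono) simp
  also have "\<dots> \<le> 2 / x"
    using assms ln2_ge_two_thirds by (simp add: field_simps)
  finally show ?thesis
    using assms by (simp add: field_simps)
qed

lemma continuous_on_mult_log2: "continuous_on {0..} (\<lambda>t::real. t * log 2 t)"
  unfolding continuous_on_def
proof (intro ballI)
  fix x :: real
  assume "x \<in> {0..}"
  show "((\<lambda>t. t * log 2 t) \<longlongrightarrow> x * log 2 x) (at x within {0..})"
  proof (cases "x = 0")
    case True
    have "((\<lambda>t::real. t * log 2 t) \<longlongrightarrow> 0) (at_right 0)"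
      by real_asymp
    then show ?thesis
      using True by (simp add: at_within_Ici_at_right)
  next
    case False
    then have "isCont (\<lambda>t. t * log 2 t) x"
      using \<open>x \<in> {0..}\<close> by (intro continuous_intros) auto
    then have "continuous (at x within {0..}) (\<lambda>t. t * log 2 t)"
      by (rule continuous_at_imp_continuous_within)
    then show ?thesis
      by (simp add: continuous_within)
  qed
qed

lemma sqrt_diff_sq_le_mult_ln:
  fixes p q :: real
  assumes "0 \<le> p" and "0 < q"
  shows "(sqrt p - sqrt q)\<^sup>2 + p - q \<le> p * ln (p / q)"
proof (cases "p = 0")
  case False
  define a b where "a = sqrt p" and "b = sqrt q"
  have "0 < a" "a\<^sup>2 = p" "0 < b" "b\<^sup>2 = q"
    using False assms unfolding a_def b_def by auto
  have "p * ln (p / q) = - 2 * a\<^sup>2 * ln (b / a)"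
    using \<open>0 < a\<close> \<open>0 < b\<close>
    by (simp add: ln_div ln_mult power2_eq_square algebra_simps flip: \<open>a\<^sup>2 = p\<close> \<open>b\<^sup>2 = q\<close>)
  also have "\<dots> \<ge> - 2 * a\<^sup>2 * (b / a - 1)"
    using ln_le_minus_one[of "b / a"] \<open>0 < a\<close> \<open>0 < b\<close> by (intro mult_left_mono_neg) auto
  also have "- 2 * a\<^sup>2 * (b / a - 1) = (a - b)\<^sup>2 + a\<^sup>2 - b\<^sup>2"
    using \<open>0 < a\<close> by (simp add: field_simps power2_eq_square)
  finally show ?thesis
    unfolding a_def b_def using assms by simp
qed (use assms in \<open>simp add: power2_eq_square\<close>)

lemma sqrt_diff_sq_le_kl_div:
  fixes p q :: "'a::finite \<Rightarrow> real"
  assumes p: "is_pmf_on UNIV p" and q: "is_pmf_on UNIV q" "\<And>a. 0 < q a"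
  shows "(sqrt (p a) - sqrt (q a))\<^sup>2 \<le> kl_div UNIV p q"
proof -
  define L where "L = (\<Sum>a\<in>UNIV. p a * ln (p a / q a))"
  have "(\<Sum>a\<in>UNIV. (sqrt (p a) - sqrt (q a))\<^sup>2 + p a - q a) \<le> L"
    unfolding L_def using p q(2) by (intro sum_mono sqrt_diff_sq_le_mult_ln) (auto simp: is_pmf_on_def)
  then have sq_le: "(\<Sum>a\<in>UNIV. (sqrt (p a) - sqrt (q a))\<^sup>2) \<le> L"
    using p q(1) by (simp add: is_pmf_on_def sum.distrib sum_subtractf)
  moreover have "(sqrt (p a) - sqrt (q a))\<^sup>2 \<le> (\<Sum>a\<in>UNIV. (sqrt (p a) - sqrt (q a))\<^sup>2)"
    by (rule member_le_sum) auto
  moreover have "L \<le> kl_div UNIV p q"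
  proof -
    have "0 \<le> (\<Sum>a\<in>UNIV. (sqrt (p a) - sqrt (q a))\<^sup>2)"
      by (intro sum_nonneg) simp
    then have "0 \<le> L"
      using sq_le by linarith
    then have "L \<le> L / ln 2"
      using ln_2_less_1 by (simp add: le_divide_eq mult_left_le)
    then show ?thesis
      by (simp add: kl_div_eq L_def log_def sum_divide_distrib)
  qed
  ultimately show ?thesis
    by linarith
qed

lemma pmf_diff_le_kl_div:
  fixes p q :: "'a::finite \<Rightarrow> real"
  assumes p: "is_pmf_on UNIV p" and q: "is_pmf_on UNIV q" "\<And>a. 0 < q a"
  shows "\<bar>p a - q a\<bar> \<le> 2 * sqrt (kl_div UNIV p q)"
proof -
  have "0 \<le> p a" and "p a \<le> 1" and "q a \<le> 1"
    using p q member_le_sum[of a UNIV p] member_le_sum[of a UNIV q]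
    by (auto simp: is_pmf_on_def)
  then have sum_le: "\<bar>sqrt (p a) + sqrt (q a)\<bar> \<le> 2"
    using q(2)[of a] by (smt (verit) real_sqrt_ge_zero real_sqrt_le_1_iff)
  have diff_le: "\<bar>sqrt (p a) - sqrt (q a)\<bar> \<le> sqrt (kl_div UNIV p q)"
    using real_sqrt_le_mono[OF sqrt_diff_sq_le_kl_div[OF assms, of a]] by simp
  have "p a - q a = (sqrt (p a) - sqrt (q a)) * (sqrt (p a) + sqrt (q a))"
    using \<open>0 \<le> p a\<close> q(2)[of a] by (simp add: algebra_simps less_imp_le)
  then have "\<bar>p a - q a\<bar> = \<bar>sqrt (p a) - sqrt (q a)\<bar> * \<bar>sqrt (p a) + sqrt (q a)\<bar>"
    by (simp only: abs_mult)
  also have "\<dots> \<le> sqrt (kl_div UNIV p q) * 2"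
    using sqrt_diff_sq_le_kl_div[OF assms, of a]
    by (intro mult_mono[OF diff_le sum_le]) (auto intro: order_trans[OF zero_le_power2])
  finally show ?thesis
    by simp
qed

lemma kl_div_marginal_le:
  fixes P :: "'a::finite list \<Rightarrow> real"
  assumes P: "\<And>xs. 0 \<le> P xs" and q: "\<And>a. 0 < q a" "sum q UNIV = 1" and "k < n"
  shows "kl_div UNIV (marginal n P k) q \<le> kl_div (seqs n) P (iid q n)"
proof -
  define fibre :: "'a \<Rightarrow> 'a list set" where "fibre a = {xs \<in> seqs n. xs ! k = a}" for a
  have "finite (fibre a)" for a
    unfolding fibre_def by (rule finite_subset[of _ "seqs n"]) auto
  have marginal_fibre: "marginal n R k a = sum R (fibre a)" for R a
    unfolding marginal_def fibre_def ..
  have "kl_div UNIV (marginal n P k) q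
      = (\<Sum>a\<in>UNIV. sum P (fibre a) * log 2 (sum P (fibre a) / sum (iid q n) (fibre a)))"
    unfolding kl_div_eq marginal_fibre[symmetric] marginal_iid[OF \<open>k < n\<close> q(2)] ..
  also have "\<dots> \<le> (\<Sum>a\<in>UNIV. \<Sum>xs\<in>fibre a. P xs * log 2 (P xs / iid q n xs))"
    using P iid_pos[of q, OF q(1)] \<open>finite (fibre _)\<close>
    by (intro sum_mono log_sum_inequality) (auto simp: less_imp_le less_imp_neq[symmetric])
  also have "\<dots> = kl_div (seqs n) P (iid q n)"
    unfolding kl_div_eq fibre_def by (rule sum.group) auto
  finally show ?thesis .
qed

lemma num_msgs_ge_1: "1 \<le> num_msgs R n"
proof -
  have "1 \<le> \<lceil>2 powr (real n * R)\<rceil>"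
    by (simp add: one_le_ceiling)
  then show ?thesis
    unfolding num_msgs_def using nat_mono by fastforce
qed

lemma mult_le_log_num_msgs: "real n * R \<le> log 2 (num_msgs R n)"
proof -
  have "2 powr (real n * R) \<le> real (num_msgs R n)"
    unfolding num_msgs_def by linarith
  then show ?thesis
    using le_log_iff[of 2 "real (num_msgs R n)" "real n * R"] num_msgs_ge_1[of R n] by simp
qed

section \<open>The state-averaged channel and covert input distributions\<close>

locale state_channel =
  fixes W :: "'x::finite \<Rightarrow> 's::finite \<Rightarrow> 'y::finite \<Rightarrow> 'z::finite \<Rightarrow> real"
    and Q :: "'s \<Rightarrow> real"
  assumes W_nonneg: "\<And>x s y z. 0 \<le> W x s y z"
    and Q_nonneg: "\<And>s. 0 \<le> Q s"
    and sum_Q: "sum Q UNIV = 1"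
    and sum_W: "\<And>x s. (\<Sum>y\<in>UNIV. \<Sum>z\<in>UNIV. W x s y z) = 1"
begin

definition WY :: "'x \<Rightarrow> 'y \<Rightarrow> real" where
  "WY x y = (\<Sum>s\<in>UNIV. Q s * (\<Sum>z\<in>UNIV. W x s y z))"

definition WZ :: "'x \<Rightarrow> 'z \<Rightarrow> real" where
  "WZ x z = (\<Sum>s\<in>UNIV. Q s * (\<Sum>y\<in>UNIV. W x s y z))"

lemma WY_nonneg: "0 \<le> WY x y"
  unfolding WY_def by (intro sum_nonneg mult_nonneg_nonneg Q_nonneg W_nonneg)

lemma WZ_nonneg: "0 \<le> WZ x z"
  unfolding WZ_def by (intro sum_nonneg mult_nonneg_nonneg Q_nonneg W_nonneg)

lemma sum_WY: "sum (WY x) UNIV = 1"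
  unfolding WY_def by (subst sum.swap) (simp add: sum_distrib_left[symmetric] sum_W sum_Q)

lemma sum_WZ: "sum (WZ x) UNIV = 1"
proof -
  have "(\<Sum>z\<in>UNIV. \<Sum>y\<in>UNIV. W x s y z) = 1" for s
    using sum_W[of x s] by (subst sum.swap)
  then show ?thesis
    unfolding WZ_def by (subst sum.swap) (simp add: sum_distrib_left[symmetric] sum_Q)
qed

lemma WZ_pmf: "is_pmf_on UNIV (WZ x)"
  by (simp add: is_pmf_on_def WZ_nonneg sum_WZ)

lemma Q0_eq_WZ: "Q0 W Q x0 = WZ x0"
  by (rule ext) (simp add: Q0_def WZ_def)

definition out_pmf :: "('x \<Rightarrow> real) \<Rightarrow> 'y \<Rightarrow> real" where
  "out_pmf p y = (\<Sum>x\<in>UNIV. p x * WY x y)"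

definition chan_info :: "('x \<Rightarrow> real) \<Rightarrow> real" where
  "chan_info p = mutual_info UNIV UNIV (\<lambda>x y. p x * WY x y)"

lemma out_pmf_nonneg: "(\<And>x. 0 \<le> p x) \<Longrightarrow> 0 \<le> out_pmf p y"
  unfolding out_pmf_def by (intro sum_nonneg mult_nonneg_nonneg WY_nonneg) auto

lemma out_pmf_ge: "(\<And>x. 0 \<le> p x) \<Longrightarrow> p x * WY x y \<le> out_pmf p y"
  unfolding out_pmf_def by (rule member_le_sum) (auto intro: mult_nonneg_nonneg WY_nonneg)

lemma sum_out_pmf: "sum p UNIV = 1 \<Longrightarrow> sum (out_pmf p) UNIV = 1"
  unfolding out_pmf_def by (subst sum.swap) (simp add: sum_distrib_left[symmetric] sum_WY)

lemma chan_info_eq: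
  "chan_info p = (\<Sum>x\<in>UNIV. \<Sum>y\<in>UNIV. p x * WY x y * log 2 (p x * WY x y / (p x * out_pmf p y)))"
  unfolding chan_info_def mutual_info_def
  by (intro sum.cong refl) (simp add: sum_distrib_left[symmetric] sum_WY out_pmf_def)

lemma chan_info_eq_entropies:
  assumes "\<And>x. 0 \<le> p x"
  shows "chan_info p = (\<Sum>x\<in>UNIV. p x * (\<Sum>y\<in>UNIV. WY x y * log 2 (WY x y)))
    - (\<Sum>y\<in>UNIV. out_pmf p y * log 2 (out_pmf p y))"
proof -
  have split: "p x * WY x y * log 2 (p x * WY x y / (p x * out_pmf p y))
      = p x * (WY x y * log 2 (WY x y)) - p x * WY x y * log 2 (out_pmf p y)" for x y
  proof (cases "p x = 0 \<or> WY x y = 0")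
    case False
    then have "0 < p x" and "0 < WY x y"
      using assms[of x] WY_nonneg[of x y] by auto
    moreover have "0 < out_pmf p y"
      using out_pmf_ge[of p x y, OF assms] mult_pos_pos[OF calculation] by linarith
    ultimately show ?thesis
      by (simp add: log_divide algebra_simps)
  qed auto
  have "(\<Sum>x\<in>UNIV. \<Sum>y\<in>UNIV. p x * WY x y * log 2 (out_pmf p y))
      = (\<Sum>y\<in>UNIV. out_pmf p y * log 2 (out_pmf p y))"
    unfolding out_pmf_def by (subst sum.swap) (simp add: sum_distrib_right)
  then show ?thesis
    unfolding chan_info_eq split by (simp add: sum_subtractf sum_distrib_left)
qed

lemma chan_info_nonneg:
  assumes "is_pmf_on UNIV p"
  shows "0 \<le> chan_info p"
proof -
  have p: "\<And>x. 0 \<le> p x" and "sum p UNIV = 1"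
    using assms by (auto simp: is_pmf_on_def)
  define a b :: "'x \<times> 'y \<Rightarrow> real"
    where "a = (\<lambda>(x, y). p x * WY x y)" and "b = (\<lambda>(x, y). p x * out_pmf p y)"
  have "sum a UNIV = 1" and "sum b UNIV = 1"
    unfolding a_def b_def UNIV_Times_UNIV[symmetric] sum.cartesian_product'
    using \<open>sum p UNIV = 1\<close> sum_out_pmf
    by (simp_all add: sum_distrib_left[symmetric] sum_WY)
  have "a xy = 0" if "b xy = 0" for xy
  proof (cases xy)
    case (Pair x y)
    then consider "p x = 0" | "out_pmf p y = 0"
      using \<open>b xy = 0\<close> by (auto simp: b_def)
    then show ?thesis
    proof cases
      case 2
      have "p x * WY x y \<le> 0" and "0 \<le> p x * WY x y"
        using out_pmf_ge[of p x y, OF p] 2 p[of x] WY_nonneg[of x y] by simp_all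
      then show ?thesis
        unfolding a_def Pair case_prod_conv by linarith
    qed (simp add: a_def Pair)
  qed
  then have "sum a UNIV * log 2 (sum a UNIV / sum b UNIV) \<le> (\<Sum>xy\<in>UNIV. a xy * log 2 (a xy / b xy))"
    using p WY_nonneg out_pmf_nonneg[OF p]
    by (intro log_sum_inequality) (auto simp: a_def b_def case_prod_beta)
  also have "\<dots> = chan_info p"
    unfolding chan_info_eq a_def b_def UNIV_Times_UNIV[symmetric] sum.cartesian_product' by simp
  finally show ?thesis
    using \<open>sum a UNIV = 1\<close> \<open>sum b UNIV = 1\<close> by simp
qed

definition covert_inputs :: "'x \<Rightarrow> ('x \<Rightarrow> real) set" where
  "covert_inputs x0 = {p. is_pmf_on UNIV p \<and> (\<forall>z. (\<Sum>x\<in>UNIV. p x * WZ x z) = WZ x0 z)}"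

text \<open>Input distributions are identified with vectors in \<open>real ^ 'x\<close> to use compactness of the simplex.\<close>

lemma compact_pmf_vecs: "compact {v :: real ^ 'x. is_pmf_on UNIV (\<lambda>x. v $ x)}"
proof (rule compact_eq_bounded_closed[THEN iffD2], intro conjI)
  show "bounded {v :: real ^ 'x. is_pmf_on UNIV (\<lambda>x. v $ x)}"
  proof (rule boundedI)
    fix v :: "real ^ 'x"
    assume "v \<in> {v. is_pmf_on UNIV (\<lambda>x. v $ x)}"
    then show "norm v \<le> 1"
      using norm_le_l1_cart[of v] by (simp add: is_pmf_on_def)
  qed
  show "closed {v :: real ^ 'x. is_pmf_on UNIV (\<lambda>x. v $ x)}"
    unfolding is_pmf_on_def ball_UNIV
    by (intro closed_Collect_conj closed_Collect_all closed_Collect_le closed_Collect_eq continuous_intros)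
qed

lemma closed_covert_vecs: "closed {v :: real ^ 'x. \<forall>z. (\<Sum>x\<in>UNIV. v $ x * WZ x z) = WZ x0 z}"
  by (intro closed_Collect_all closed_Collect_eq continuous_intros)

lemma continuous_on_chan_info:
  "continuous_on {v. is_pmf_on UNIV (\<lambda>x. v $ x)} (\<lambda>v. chan_info (\<lambda>x. v $ x))"
proof -
  let ?P = "{v :: real ^ 'x. is_pmf_on UNIV (\<lambda>x. v $ x)}"
  have "continuous_on ?P (\<lambda>v. out_pmf (\<lambda>x. v $ x) y)" for y
    unfolding out_pmf_def by (intro continuous_intros)
  moreover have "(\<lambda>v. out_pmf (\<lambda>x. v $ x) y) ` ?P \<subseteq> {0..}" for y
    by (auto simp: is_pmf_on_def intro!: out_pmf_nonneg)
  ultimately have "continuous_on ?P (\<lambda>v. out_pmf (\<lambda>x. v $ x) y * log 2 (out_pmf (\<lambda>x. v $ x) y))" for y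
    by (rule continuous_on_compose2[OF continuous_on_mult_log2])
  then have out_entropy: "continuous_on ?P
      (\<lambda>v. \<Sum>y\<in>UNIV. out_pmf (\<lambda>x. v $ x) y * log 2 (out_pmf (\<lambda>x. v $ x) y))"
    by (rule continuous_on_sum)
  then have cont: "continuous_on ?P (\<lambda>v. (\<Sum>x\<in>UNIV. v $ x * (\<Sum>y\<in>UNIV. WY x y * log 2 (WY x y)))
      - (\<Sum>y\<in>UNIV. out_pmf (\<lambda>x. v $ x) y * log 2 (out_pmf (\<lambda>x. v $ x) y)))"
    by (intro continuous_on_diff[OF _ out_entropy] continuous_intros)
  have eq: "chan_info (\<lambda>x. v $ x) = (\<Sum>x\<in>UNIV. v $ x * (\<Sum>y\<in>UNIV. WY x y * log 2 (WY x y)))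
      - (\<Sum>y\<in>UNIV. out_pmf (\<lambda>x. v $ x) y * log 2 (out_pmf (\<lambda>x. v $ x) y))" if "v \<in> ?P" for v
    using that by (intro chan_info_eq_entropies) (simp add: is_pmf_on_def)
  show ?thesis
    using cont by (rule continuous_on_eq) (simp add: eq)
qed

lemma chan_info_attains_max: "\<exists>p\<in>covert_inputs x0. \<forall>q\<in>covert_inputs x0. chan_info q \<le> chan_info p"
proof -
  let ?K = "{v :: real ^ 'x. is_pmf_on UNIV (\<lambda>x. v $ x)} \<inter> {v. \<forall>z. (\<Sum>x\<in>UNIV. v $ x * WZ x z) = WZ x0 z}"
  have "compact ?K"
    by (intro compact_Int_closed compact_pmf_vecs closed_covert_vecs)
  moreover have "(\<chi> x. if x = x0 then 1 else 0) \<in> ?K"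
  proof -
    have "(\<Sum>x\<in>UNIV. (if x = x0 then 1 else 0) * WZ x z) = (\<Sum>x\<in>UNIV. if x = x0 then WZ x z else 0)" for z
      by (intro sum.cong) auto
    then show ?thesis
      by (simp add: is_pmf_on_def)
  qed
  then have "?K \<noteq> {}"
    by blast
  moreover have "continuous_on ?K (\<lambda>v. chan_info (\<lambda>x. v $ x))"
    by (rule continuous_on_subset[OF continuous_on_chan_info]) blast
  ultimately have "\<exists>v\<in>?K. \<forall>w\<in>?K. chan_info (\<lambda>x. w $ x) \<le> chan_info (\<lambda>x. v $ x)"
    by (rule continuous_attains_sup)
  then obtain v where "v \<in> ?K" and v_max: "\<And>w. w \<in> ?K \<Longrightarrow> chan_info (\<lambda>x. w $ x) \<le> chan_info (\<lambda>x. v $ x)"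
    by blast
  show ?thesis
  proof (intro bexI ballI)
    show "(\<lambda>x. v $ x) \<in> covert_inputs x0"
      using \<open>v \<in> ?K\<close> by (simp add: covert_inputs_def)
    fix q
    assume "q \<in> covert_inputs x0"
    then have "(\<chi> x. q x) \<in> ?K"
      by (simp add: covert_inputs_def vec_lambda_inverse)
    then show "chan_info q \<le> chan_info (\<lambda>x. v $ x)"
      using v_max[of "\<chi> x. q x"] by (simp add: vec_lambda_inverse)
  qed
qed

lemma covert_limit:
  fixes p :: "nat \<Rightarrow> 'x \<Rightarrow> real"
  assumes p: "\<And>n. is_pmf_on UNIV (p n)"
    and out_lim: "\<And>z. (\<lambda>n. \<Sum>x\<in>UNIV. p n x * WZ x z) \<longlonglongrightarrow> WZ x0 z"
    and lower: "eventually (\<lambda>n. r n \<le> chan_info (p n)) sequentially" and "r \<longlonglongrightarrow> R"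
  shows "\<exists>q\<in>covert_inputs x0. R \<le> chan_info q"
proof -
  let ?P = "{v :: real ^ 'x. is_pmf_on UNIV (\<lambda>x. v $ x)}"
  define u where "u n = (\<chi> x. p n x)" for n
  have u_pmf: "u n \<in> ?P" for n
    using p by (simp add: u_def vec_lambda_inverse)
  obtain l \<sigma> where "l \<in> ?P" and "strict_mono \<sigma>" and "(u \<circ> \<sigma>) \<longlonglongrightarrow> l"
    using seq_compactE[OF compact_imp_seq_compact[OF compact_pmf_vecs], of u] u_pmf by blast
  then have u_lim: "(\<lambda>n. u (\<sigma> n)) \<longlonglongrightarrow> l"
    by (simp add: o_def)
  have "(\<lambda>x. l $ x) \<in> covert_inputs x0"
  proof -
    have "(\<Sum>x\<in>UNIV. l $ x * WZ x z) = WZ x0 z" for z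
    proof (rule LIMSEQ_unique)
      show "(\<lambda>n. \<Sum>x\<in>UNIV. u (\<sigma> n) $ x * WZ x z) \<longlonglongrightarrow> (\<Sum>x\<in>UNIV. l $ x * WZ x z)"
        by (intro tendsto_intros u_lim)
      show "(\<lambda>n. \<Sum>x\<in>UNIV. u (\<sigma> n) $ x * WZ x z) \<longlonglongrightarrow> WZ x0 z"
        using LIMSEQ_subseq_LIMSEQ[OF out_lim \<open>strict_mono \<sigma>\<close>] by (simp add: u_def o_def)
    qed
    then show ?thesis
      using \<open>l \<in> ?P\<close> by (simp add: covert_inputs_def)
  qed
  moreover have "R \<le> chan_info (\<lambda>x. l $ x)"
  proof (rule tendsto_le[OF trivial_limit_sequentially])
    show "(\<lambda>n. chan_info (\<lambda>x. u (\<sigma> n) $ x)) \<longlonglongrightarrow> chan_info (\<lambda>x. l $ x)"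
      using continuous_on_tendsto_compose[OF continuous_on_chan_info u_lim \<open>l \<in> ?P\<close>]
        u_pmf by simp
    show "(\<lambda>n. r (\<sigma> n)) \<longlonglongrightarrow> R"
      using LIMSEQ_subseq_LIMSEQ[OF \<open>r \<longlonglongrightarrow> R\<close> \<open>strict_mono \<sigma>\<close>] by (simp add: o_def)
    show "eventually (\<lambda>n. r (\<sigma> n) \<le> chan_info (\<lambda>x. u (\<sigma> n) $ x)) sequentially"
      using eventually_subseq[OF \<open>strict_mono \<sigma>\<close> lower] by (simp add: u_def)
  qed
  ultimately show ?thesis
    by blast
qed

section \<open>Converse bounds for a single code\<close>

definition path_prob :: "(nat \<Rightarrow> 's list \<Rightarrow> 'x) \<Rightarrow> nat \<Rightarrow> 's list \<Rightarrow> 'y list \<Rightarrow> 'z list \<Rightarrow> real"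
  where "path_prob e k ss ys zs = (\<Prod>i<k. Q (ss ! i) * W (e i (take i ss)) (ss ! i) (ys ! i) (zs ! i))"

lemma path_prob_nonneg: "0 \<le> path_prob e k ss ys zs"
  unfolding path_prob_def by (intro prod_nonneg mult_nonneg_nonneg Q_nonneg W_nonneg)

lemma path_prob_0: "path_prob e 0 ss ys zs = 1"
  by (simp add: path_prob_def)

lemma path_prob_snoc:
  assumes "length ss = k" and "length ys = k" and "length zs = k"
  shows "path_prob e (Suc k) (ss @ [s]) (ys @ [y]) (zs @ [z])
    = path_prob e k ss ys zs * (Q s * W (e k ss) s y z)"
  unfolding path_prob_def using assms by (auto simp: lessThan_Suc nth_append intro!: prod.cong)

lemma sum_seqs3_path_prob_prefix:
  assumes "k \<le> n"
  shows "sum_seqs3 n (\<lambda>ss ys zs. path_prob e n ss ys zs * h (take k ss) (take k ys) (take k zs))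
    = sum_seqs3 k (\<lambda>ss ys zs. path_prob e k ss ys zs * h ss ys zs)"
  using assms
proof (induction n)
  case 0
  then show ?case
    by (simp add: sum_seqs3_0)
next
  case (Suc n)
  show ?case
  proof (cases "k = Suc n")
    case False
    then have "k \<le> n"
      using Suc by simp
    have "sum_seqs3 (Suc n) (\<lambda>ss ys zs. path_prob e (Suc n) ss ys zs * h (take k ss) (take k ys) (take k zs))
      = sum_seqs3 n (\<lambda>ss ys zs. \<Sum>s\<in>UNIV. \<Sum>y\<in>UNIV. \<Sum>z\<in>UNIV.
          path_prob e n ss ys zs * h (take k ss) (take k ys) (take k zs) * (Q s * W (e n ss) s y z))"
      unfolding sum_seqs3_Suc using \<open>k \<le> n\<close>
      by (intro sum_seqs3_cong sum.cong refl) (simp add: path_prob_snoc)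
    also have "\<dots> = sum_seqs3 n (\<lambda>ss ys zs. path_prob e n ss ys zs * h (take k ss) (take k ys) (take k zs))"
      by (intro sum_seqs3_cong) (simp add: sum_distrib_left[symmetric] sum_W sum_Q)
    finally show ?thesis
      using Suc.IH[OF \<open>k \<le> n\<close>] by simp
  qed (auto intro: sum_seqs3_cong)
qed

lemma sum_seqs3_path_prob: "sum_seqs3 n (path_prob e n) = 1"
  using sum_seqs3_path_prob_prefix[of 0 n e "\<lambda>_ _ _. 1"]
  by (simp add: sum_seqs3_0 path_prob_0)

definition input_pmf :: "(nat \<Rightarrow> 's list \<Rightarrow> 'x) \<Rightarrow> nat \<Rightarrow> 'x \<Rightarrow> real"
  where "input_pmf e k x = sum_seqs3 k (\<lambda>ss ys zs. if e k ss = x then path_prob e k ss ys zs else 0)"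

lemma sum_seqs3_path_prob_input:
  "sum_seqs3 k (\<lambda>ss ys zs. path_prob e k ss ys zs * g (e k ss)) = (\<Sum>x\<in>UNIV. input_pmf e k x * g x)"
proof -
  have "path_prob e k ss ys zs * g (e k ss)
      = (\<Sum>x\<in>UNIV. (if e k ss = x then path_prob e k ss ys zs else 0) * g x)" for ss ys zs
    by (simp add: if_distrib[of "\<lambda>t. t * g _"] cong: if_cong)
  then have "sum_seqs3 k (\<lambda>ss ys zs. path_prob e k ss ys zs * g (e k ss))
      = (\<Sum>x\<in>UNIV. sum_seqs3 k (\<lambda>ss ys zs. (if e k ss = x then path_prob e k ss ys zs else 0) * g x))"
    by (simp add: sum_seqs3_sum)
  also have "\<dots> = (\<Sum>x\<in>UNIV. input_pmf e k x * g x)"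
    unfolding input_pmf_def by (simp only: sum_seqs3_def sum_distrib_right)
  finally show ?thesis .
qed

lemma input_pmf: "is_pmf_on UNIV (input_pmf e k)"
proof -
  have "0 \<le> input_pmf e k x" for x
    unfolding input_pmf_def sum_seqs3_def by (intro sum_nonneg) (simp add: path_prob_nonneg)
  moreover have "sum (input_pmf e k) UNIV = 1"
    using sum_seqs3_path_prob_input[where g = "\<lambda>_. 1"] sum_seqs3_path_prob by simp
  ultimately show ?thesis
    by (simp add: is_pmf_on_def)
qed

definition out_seq_pmf :: "(nat \<Rightarrow> 's list \<Rightarrow> 'x) \<Rightarrow> nat \<Rightarrow> 'y list \<Rightarrow> real"
  where "out_seq_pmf e k ys = (\<Sum>ss\<in>seqs k. \<Sum>zs\<in>seqs k. path_prob e k ss ys zs)"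

lemma out_seq_pmf_nonneg: "0 \<le> out_seq_pmf e k ys"
  unfolding out_seq_pmf_def by (intro sum_nonneg path_prob_nonneg)

lemma sum_out_seq_pmf: "(\<Sum>ys\<in>seqs k. out_seq_pmf e k ys) = 1"
  using sum_seqs3_path_prob[of k e] unfolding out_seq_pmf_def sum_seqs3_def
  by (subst sum.swap) simp

text \<open>This is where strict causality enters: the next state is independent of the past, so given the
  past the next output is drawn from \<open>W_Y\<close> at the input \<open>e k ss\<close> chosen from the past states.\<close>

lemma out_seq_pmf_snoc:
  assumes "length ys = k"
  shows "out_seq_pmf e (Suc k) (ys @ [y]) = (\<Sum>ss\<in>seqs k. \<Sum>zs\<in>seqs k. path_prob e k ss ys zs * WY (e k ss) y)"
proof -
  have "out_seq_pmf e (Suc k) (ys @ [y]) = (\<Sum>ss\<in>seqs k. \<Sum>s\<in>UNIV. \<Sum>zs\<in>seqs k. \<Sum>z\<in>UNIV.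
      path_prob e k ss ys zs * (Q s * W (e k ss) s y z))"
    unfolding out_seq_pmf_def sum_seqs_Suc using assms by (intro sum.cong refl) (simp add: path_prob_snoc)
  also have "\<dots> = (\<Sum>ss\<in>seqs k. \<Sum>zs\<in>seqs k. \<Sum>s\<in>UNIV. \<Sum>z\<in>UNIV. path_prob e k ss ys zs * (Q s * W (e k ss) s y z))"
    by (intro sum.cong refl, rule sum.swap)
  also have "\<dots> = (\<Sum>ss\<in>seqs k. \<Sum>zs\<in>seqs k. path_prob e k ss ys zs * WY (e k ss) y)"
    unfolding WY_def by (simp add: sum_distrib_left mult.assoc)
  finally show ?thesis .
qed

lemma sum_out_seq_pmf_snoc:
  assumes "length ys = k"
  shows "(\<Sum>y\<in>UNIV. out_seq_pmf e (Suc k) (ys @ [y])) = out_seq_pmf e k ys"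
proof -
  have "(\<Sum>y\<in>UNIV. out_seq_pmf e (Suc k) (ys @ [y]))
      = (\<Sum>ss\<in>seqs k. \<Sum>zs\<in>seqs k. path_prob e k ss ys zs * sum (WY (e k ss)) UNIV)"
    unfolding out_seq_pmf_snoc[OF assms] sum_distrib_left
    by (subst sum.swap, rule sum.cong[OF refl], subst sum.swap, rule refl)
  then show ?thesis
    by (simp add: sum_WY out_seq_pmf_def)
qed

lemma out_seq_pmf_snoc_eq_0:
  assumes "length ys = k" and "out_seq_pmf e k ys = 0"
  shows "out_seq_pmf e (Suc k) (ys @ [y]) = 0"
proof -
  have "\<forall>ss\<in>seqs k. \<forall>zs\<in>seqs k. path_prob e k ss ys zs = 0"
    using assms(2) unfolding out_seq_pmf_def
    by (simp add: sum_nonneg_eq_0_iff path_prob_nonneg sum_nonneg)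
  then show ?thesis
    by (simp add: out_seq_pmf_snoc[OF assms(1)])
qed

definition div_WY :: "('y \<Rightarrow> real) \<Rightarrow> 'x \<Rightarrow> real"
  where "div_WY r x = kl_div UNIV (WY x) r"

lemma log_out_seq_pmf_snoc:
  fixes e :: "nat \<Rightarrow> 's list \<Rightarrow> 'x" and y :: 'y
  assumes r: "\<And>y. 0 < r y" and "length ys = n"
  defines "P \<equiv> out_seq_pmf e n ys" and "P' \<equiv> out_seq_pmf e (Suc n) (ys @ [y])"
  shows "P' * log 2 (P' / iid r (Suc n) (ys @ [y])) = P' * log 2 (P' / (P * r y)) + P' * log 2 (P / iid r n ys)"
proof (cases "P' = 0")
  case False
  then have "0 < P'" and "0 < P"
    using out_seq_pmf_snoc_eq_0[OF \<open>length ys = n\<close>] out_seq_pmf_nonneg[of e]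
    unfolding P_def P'_def by (auto simp: less_le)
  then show ?thesis
    using iid_pos[of r n ys, OF r] r[of y]
    by (simp add: iid_snoc[OF \<open>length ys = n\<close>] log_divide log_mult algebra_simps)
qed simp

lemma out_seq_pmf_snoc_log_le:
  fixes e :: "nat \<Rightarrow> 's list \<Rightarrow> 'x" and y :: 'y
  assumes r: "\<And>y. 0 < r y" and "length ys = n"
  defines "P \<equiv> out_seq_pmf e n ys" and "P' \<equiv> out_seq_pmf e (Suc n) (ys @ [y])"
  shows "P' * log 2 (P' / (P * r y))
    \<le> (\<Sum>ss\<in>seqs n. \<Sum>zs\<in>seqs n. path_prob e n ss ys zs * (WY (e n ss) y * log 2 (WY (e n ss) y / r y)))"
proof -
  define a b where "a = (\<lambda>p. path_prob e n (fst p) ys (snd p) * WY (e n (fst p)) y)"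
    and "b = (\<lambda>p. path_prob e n (fst p) ys (snd p) * r y)"
  have "P' = sum a (seqs n \<times> seqs n)"
    unfolding P'_def a_def by (simp add: out_seq_pmf_snoc[OF \<open>length ys = n\<close>] sum.cartesian_product')
  moreover have "P * r y = sum b (seqs n \<times> seqs n)"
    unfolding P_def b_def by (simp add: out_seq_pmf_def sum.cartesian_product' sum_distrib_right)
  moreover have "sum a (seqs n \<times> seqs n) * log 2 (sum a (seqs n \<times> seqs n) / sum b (seqs n \<times> seqs n))
      \<le> (\<Sum>p\<in>seqs n \<times> seqs n. a p * log 2 (a p / b p))"
    using r[of y] path_prob_nonneg WY_nonneg
    by (intro log_sum_inequality) (auto simp: a_def b_def less_imp_le)
  moreover have "a p * log 2 (a p / b p)
      = path_prob e n (fst p) ys (snd p) * (WY (e n (fst p)) y * log 2 (WY (e n (fst p)) y / r y))" for p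
    by (cases "path_prob e n (fst p) ys (snd p) = 0") (auto simp: a_def b_def)
  ultimately show ?thesis
    by (simp add: sum.cartesian_product')
qed

lemma kl_out_seq_pmf_Suc:
  assumes r: "\<And>y. 0 < r y"
  shows "kl_div (seqs (Suc n)) (out_seq_pmf e (Suc n)) (iid r (Suc n))
    \<le> kl_div (seqs n) (out_seq_pmf e n) (iid r n) + (\<Sum>x\<in>UNIV. input_pmf e n x * div_WY r x)"
proof -
  let ?P = "out_seq_pmf e n" and ?P' = "\<lambda>ys y. out_seq_pmf e (Suc n) (ys @ [y])"
  let ?D = "\<lambda>x y. WY x y * log 2 (WY x y / r y)"
  have "kl_div (seqs (Suc n)) (out_seq_pmf e (Suc n)) (iid r (Suc n))
      = (\<Sum>ys\<in>seqs n. \<Sum>y\<in>UNIV. ?P' ys y * log 2 (?P' ys y / iid r (Suc n) (ys @ [y])))"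
    unfolding kl_div_eq by (rule sum_seqs_Suc)
  also have "\<dots> = (\<Sum>ys\<in>seqs n. \<Sum>y\<in>UNIV. ?P' ys y * log 2 (?P' ys y / (?P ys * r y)))
      + (\<Sum>ys\<in>seqs n. (\<Sum>y\<in>UNIV. ?P' ys y) * log 2 (?P ys / iid r n ys))"
    using r by (simp add: log_out_seq_pmf_snoc sum.distrib sum_distrib_right)
  also have "(\<Sum>ys\<in>seqs n. (\<Sum>y\<in>UNIV. ?P' ys y) * log 2 (?P ys / iid r n ys))
      = kl_div (seqs n) (out_seq_pmf e n) (iid r n)"
    unfolding kl_div_eq by (intro sum.cong refl) (simp add: sum_out_seq_pmf_snoc)
  also have "(\<Sum>ys\<in>seqs n. \<Sum>y\<in>UNIV. ?P' ys y * log 2 (?P' ys y / (?P ys * r y)))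
      \<le> (\<Sum>ys\<in>seqs n. \<Sum>y\<in>UNIV. \<Sum>ss\<in>seqs n. \<Sum>zs\<in>seqs n. path_prob e n ss ys zs * ?D (e n ss) y)"
    by (intro sum_mono out_seq_pmf_snoc_log_le r) simp
  also have "\<dots> = sum_seqs3 n (\<lambda>ss ys zs. path_prob e n ss ys zs * div_WY r (e n ss))"
  proof -
    have "(\<Sum>ys\<in>seqs n. \<Sum>y\<in>UNIV. \<Sum>ss\<in>seqs n. \<Sum>zs\<in>seqs n. path_prob e n ss ys zs * ?D (e n ss) y)
        = (\<Sum>ys\<in>seqs n. \<Sum>ss\<in>seqs n. \<Sum>zs\<in>seqs n. \<Sum>y\<in>UNIV. path_prob e n ss ys zs * ?D (e n ss) y)"
      by (intro sum.cong refl) (subst sum.swap, rule sum.cong[OF refl], rule sum.swap)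
    also have "\<dots> = (\<Sum>ss\<in>seqs n. \<Sum>ys\<in>seqs n. \<Sum>zs\<in>seqs n. \<Sum>y\<in>UNIV. path_prob e n ss ys zs * ?D (e n ss) y)"
      by (rule sum.swap)
    finally show ?thesis
      unfolding sum_seqs3_def div_WY_def kl_div_eq by (simp add: sum_distrib_left)
  qed
  also have "\<dots> = (\<Sum>x\<in>UNIV. input_pmf e n x * div_WY r x)"
    by (rule sum_seqs3_path_prob_input)
  finally show ?thesis
    by simp
qed

lemma kl_out_seq_pmf_le:
  assumes "\<And>y. 0 < r y"
  shows "kl_div (seqs n) (out_seq_pmf e n) (iid r n) \<le> (\<Sum>k<n. \<Sum>x\<in>UNIV. input_pmf e k x * div_WY r x)"
proof (induction n)
  case 0
  then show ?case
    by (simp add: kl_div_eq seqs_0 out_seq_pmf_def path_prob_0 iid_def)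
next
  case (Suc n)
  then show ?case
    using kl_out_seq_pmf_Suc[where r = r and n = n and e = e, OF assms] by simp
qed

lemma code_joint_eq: "code_joint W Q N n enc m ss ys zs = path_prob (\<lambda>i. enc i m) n ss ys zs / N"
  unfolding code_joint_def path_prob_def by simp

lemma error_prob_eq:
  "error_prob W Q N n enc dec
    = (\<Sum>m\<in>{1..N}. \<Sum>ys\<in>seqs n. if dec ys \<noteq> m then out_seq_pmf (\<lambda>i. enc i m) n ys / N else 0)"
proof -
  have "error_prob W Q N n enc dec = (\<Sum>m\<in>{1..N}. \<Sum>ys\<in>seqs n. \<Sum>ss\<in>seqs n. \<Sum>zs\<in>seqs n.
      if dec ys \<noteq> m then code_joint W Q N n enc m ss ys zs else 0)"
    unfolding error_prob_def by (intro sum.cong refl, rule sum.swap)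
  also have "\<dots> = (\<Sum>m\<in>{1..N}. \<Sum>ys\<in>seqs n. if dec ys \<noteq> m then out_seq_pmf (\<lambda>i. enc i m) n ys / N else 0)"
    by (intro sum.cong refl) (auto simp: out_seq_pmf_def code_joint_eq sum_divide_distrib)
  finally show ?thesis .
qed

lemma fano_bound:
  fixes enc :: "nat \<Rightarrow> nat \<Rightarrow> 's list \<Rightarrow> 'x" and dec :: "'y list \<Rightarrow> nat"
  assumes "1 \<le> N" and r: "is_pmf_on UNIV r" "\<And>y. 0 < r y"
  shows "(1 - error_prob W Q N n enc dec) * log 2 N - 4
    \<le> (\<Sum>m\<in>{1..N}. kl_div (seqs n) (out_seq_pmf (\<lambda>i. enc i m) n) (iid r n)) / N"
proof -
  define G C where "G = {1..N} \<times> seqs n" and "C = {p \<in> G. dec (snd p) = fst p}"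
  define a b :: "nat \<times> 'y list \<Rightarrow> real"
    where "a = (\<lambda>p. out_seq_pmf (\<lambda>i. enc i (fst p)) n (snd p) / N)" and "b = (\<lambda>p. iid r n (snd p) / N)"
  have "0 < real N"
    using assms(1) by simp
  have sum_G: "sum f G = (\<Sum>m\<in>{1..N}. \<Sum>ys\<in>seqs n. f (m, ys))" for f :: "nat \<times> 'y list \<Rightarrow> real"
    unfolding G_def by (rule sum.cartesian_product')
  have sum_C: "sum f C = (\<Sum>m\<in>{1..N}. \<Sum>ys\<in>seqs n. if dec ys = m then f (m, ys) else 0)"
    for f :: "nat \<times> 'y list \<Rightarrow> real"
  proof -
    have "sum f C = (\<Sum>p\<in>G. if dec (snd p) = fst p then f p else 0)"
      unfolding C_def by (rule sum.inter_filter) (simp add: G_def)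
    then show ?thesis
      by (simp add: sum_G)
  qed
  have "sum a G = 1"
    using \<open>0 < real N\<close> by (simp add: sum_G a_def sum_divide_distrib[symmetric] sum_out_seq_pmf)
  have "sum b G = 1"
    using \<open>0 < real N\<close> r(1) by (simp add: sum_G b_def sum_divide_distrib[symmetric] sum_iid is_pmf_on_def)
  have "sum b C = (\<Sum>m\<in>{1..N}. \<Sum>ys\<in>seqs n. if dec ys = m then iid r n ys / N else 0)"
    unfolding sum_C b_def by (simp cong: if_cong)
  also have "\<dots> \<le> (\<Sum>ys\<in>seqs n. iid r n ys / N)"
    using iid_pos[of r, OF r(2)] \<open>0 < real N\<close> by (intro sum_decoded_le) (auto simp: less_imp_le)
  also have "\<dots> = 1 / N"
    using r(1) by (simp add: sum_divide_distrib[symmetric] sum_iid is_pmf_on_def)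
  finally have "sum b C \<le> 1 / N" .
  have "sum a C + error_prob W Q N n enc dec = sum a G"
    unfolding sum_C sum_G error_prob_eq sum.distrib[symmetric] by (intro sum.cong refl) (simp add: a_def)
  then have correct: "sum a C = 1 - error_prob W Q N n enc dec"
    using \<open>sum a G = 1\<close> by simp
  have kl: "(\<Sum>p\<in>G. a p * log 2 (a p / b p))
      = (\<Sum>m\<in>{1..N}. kl_div (seqs n) (out_seq_pmf (\<lambda>i. enc i m) n) (iid r n)) / N"
    using \<open>0 < real N\<close> by (simp add: sum_G a_def b_def kl_div_eq sum_divide_distrib)
  have "sum a C * log 2 N - 4 \<le> (\<Sum>p\<in>G. a p * log 2 (a p / b p))"
    using \<open>sum a G = 1\<close> \<open>sum b G = 1\<close> \<open>sum b C \<le> 1 / N\<close> \<open>0 < real N\<close>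
      iid_pos[of r, OF r(2)] out_seq_pmf_nonneg
    by (intro fano_log_sum_bound) (auto simp: G_def C_def a_def b_def)
  then show ?thesis
    unfolding correct kl .
qed

definition avg_input :: "nat \<Rightarrow> nat \<Rightarrow> (nat \<Rightarrow> nat \<Rightarrow> 's list \<Rightarrow> 'x) \<Rightarrow> 'x \<Rightarrow> real"
  where "avg_input N n enc x = (\<Sum>m\<in>{1..N}. \<Sum>k<n. input_pmf (\<lambda>i. enc i m) k x) / (real N * real n)"

lemma sum_input_pmf_eq_avg_input:
  assumes "1 \<le> N" and "1 \<le> n"
  shows "(\<Sum>m\<in>{1..N}. \<Sum>k<n. \<Sum>x\<in>UNIV. input_pmf (\<lambda>i. enc i m) k x * g x)
    = real N * real n * (\<Sum>x\<in>UNIV. avg_input N n enc x * g x)"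
proof -
  have "real N * real n * (\<Sum>x\<in>UNIV. avg_input N n enc x * g x)
      = (\<Sum>x\<in>UNIV. (\<Sum>m\<in>{1..N}. \<Sum>k<n. input_pmf (\<lambda>i. enc i m) k x) * g x)"
    unfolding avg_input_def sum_distrib_left using assms by (intro sum.cong refl) simp
  also have "\<dots> = (\<Sum>m\<in>{1..N}. \<Sum>k<n. \<Sum>x\<in>UNIV. input_pmf (\<lambda>i. enc i m) k x * g x)"
    unfolding sum_distrib_right by (subst sum.swap) (rule sum.cong[OF refl], rule sum.swap)
  finally show ?thesis
    by (rule sym)
qed

lemma avg_input_pmf:
  assumes "1 \<le> N" and "1 \<le> n"
  shows "is_pmf_on UNIV (avg_input N n enc)"
proof -
  have "0 \<le> avg_input N n enc x" for x
    using input_pmf by (auto simp: avg_input_def is_pmf_on_def intro!: sum_nonneg divide_nonneg_nonneg)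
  moreover have "real N * real n * sum (avg_input N n enc) UNIV = real N * real n"
    using sum_input_pmf_eq_avg_input[OF assms, where g = "\<lambda>_. 1"] input_pmf
    by (simp add: is_pmf_on_def)
  then have "sum (avg_input N n enc) UNIV = 1"
    using assms by simp
  ultimately show ?thesis
    by (simp add: is_pmf_on_def)
qed

lemma sum_div_WY_le:
  assumes p: "is_pmf_on UNIV p" and "0 < c" and r: "\<And>y. 0 < r y" "\<And>y. c * out_pmf p y \<le> r y"
  shows "(\<Sum>x\<in>UNIV. p x * div_WY r x) \<le> chan_info p + log 2 (1 / c)"
proof -
  have p_nonneg: "\<And>x. 0 \<le> p x"
    using p by (simp add: is_pmf_on_def)
  have pointwise: "p x * (WY x y * log 2 (WY x y / r y))
      \<le> p x * WY x y * log 2 (p x * WY x y / (p x * out_pmf p y)) + p x * WY x y * log 2 (1 / c)" for x y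
  proof (cases "p x = 0 \<or> WY x y = 0")
    case False
    then have "0 < p x" and "0 < WY x y"
      using p_nonneg[of x] WY_nonneg[of x y] by auto
    then have "0 < out_pmf p y"
      using out_pmf_ge[of p x y, OF p_nonneg] mult_pos_pos[of "p x" "WY x y"] by linarith
    then have "log 2 (WY x y / r y) \<le> log 2 (WY x y / (c * out_pmf p y))"
      using \<open>0 < WY x y\<close> \<open>0 < c\<close> r[of y] by (simp add: divide_left_mono)
    also have "\<dots> = log 2 (p x * WY x y / (p x * out_pmf p y) * (1 / c))"
      using \<open>0 < p x\<close> by (simp add: ac_simps)
    also have "\<dots> = log 2 (p x * WY x y / (p x * out_pmf p y)) + log 2 (1 / c)"
      using \<open>0 < p x\<close> \<open>0 < WY x y\<close> \<open>0 < out_pmf p y\<close> \<open>0 < c\<close> by (subst log_mult) auto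
    finally have "p x * WY x y * log 2 (WY x y / r y)
        \<le> p x * WY x y * (log 2 (p x * WY x y / (p x * out_pmf p y)) + log 2 (1 / c))"
      using \<open>0 < p x\<close> \<open>0 < WY x y\<close> by (intro mult_left_mono) auto
    then show ?thesis
      by (simp add: algebra_simps)
  qed auto
  have "(\<Sum>x\<in>UNIV. p x * div_WY r x) = (\<Sum>x\<in>UNIV. \<Sum>y\<in>UNIV. p x * (WY x y * log 2 (WY x y / r y)))"
    unfolding div_WY_def kl_div_eq by (simp add: sum_distrib_left)
  also have "\<dots> \<le> (\<Sum>x\<in>UNIV. \<Sum>y\<in>UNIV.
      p x * WY x y * log 2 (p x * WY x y / (p x * out_pmf p y)) + p x * WY x y * log 2 (1 / c))"
    by (intro sum_mono pointwise)
  also have "\<dots> = chan_info p + (\<Sum>x\<in>UNIV. p x * sum (WY x) UNIV) * log 2 (1 / c)"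
    unfolding chan_info_eq by (simp add: sum.distrib sum_distrib_left sum_distrib_right mult.assoc)
  finally show ?thesis
    using p by (simp add: sum_WY is_pmf_on_def)
qed

lemma code_rate_bound:
  fixes enc :: "nat \<Rightarrow> nat \<Rightarrow> 's list \<Rightarrow> 'x" and dec :: "'y list \<Rightarrow> nat"
  assumes "1 \<le> n" and "1 \<le> N"
  shows "(1 - error_prob W Q N n enc dec) * log 2 N - 6 \<le> n * chan_info (avg_input N n enc)"
proof -
  define p where "p = avg_input N n enc"
  define c :: real where "c = n / (n + 1)"
  (* Mixing in the uniform distribution keeps r positive; the weight c = n / (n + 1) of the
     output distribution of p costs at most n log (1 + 1/n) <= 2 bits. *)
  define r where "r y = c * out_pmf p y + (1 - c) / CARD('y)" for y
  have p: "is_pmf_on UNIV p"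
    unfolding p_def by (intro avg_input_pmf assms)
  have "0 < c" and "c < 1"
    using assms by (auto simp: c_def)
  have r_pos: "0 < r y" for y
    using \<open>0 < c\<close> \<open>c < 1\<close> out_pmf_nonneg[of p y] p
    unfolding r_def is_pmf_on_def by (intro add_nonneg_pos) auto
  have r: "is_pmf_on UNIV r"
    using r_pos p sum_out_pmf[of p]
    by (simp add: is_pmf_on_def r_def sum.distrib sum_distrib_left[symmetric] less_imp_le)
  have "(1 - error_prob W Q N n enc dec) * log 2 N - 4
      \<le> (\<Sum>m\<in>{1..N}. kl_div (seqs n) (out_seq_pmf (\<lambda>i. enc i m) n) (iid r n)) / N"
    using assms(2) r r_pos by (rule fano_bound)
  also have "\<dots> \<le> (\<Sum>m\<in>{1..N}. \<Sum>k<n. \<Sum>x\<in>UNIV. input_pmf (\<lambda>i. enc i m) k x * div_WY r x) / N"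
    using r_pos by (intro divide_right_mono sum_mono kl_out_seq_pmf_le) auto
  also have "\<dots> = n * (\<Sum>x\<in>UNIV. p x * div_WY r x)"
    using sum_input_pmf_eq_avg_input[OF assms(2,1), where enc = enc and g = "div_WY r"] assms
    by (simp add: p_def)
  also have "\<dots> \<le> n * (chan_info p + log 2 (1 / c))"
    using p \<open>0 < c\<close> \<open>c < 1\<close> r_pos by (intro mult_left_mono sum_div_WY_le) (auto simp: r_def)
  also have "\<dots> \<le> n * chan_info p + 2"
    using mult_log2_one_plus_inverse_le[of n] assms by (simp add: c_def field_simps)
  finally show ?thesis
    by (simp add: p_def)
qed

lemma sum_seqs3_path_prob_nth:
  assumes "k < n"
  shows "sum_seqs3 n (\<lambda>ss ys zs. if zs ! k = z then path_prob e n ss ys zs else 0)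
    = (\<Sum>x\<in>UNIV. input_pmf e k x * WZ x z)"
proof -
  define h :: "'s list \<Rightarrow> 'y list \<Rightarrow> 'z list \<Rightarrow> real"
    where "h ss ys zs = (if zs ! k = z then 1 else 0)" for ss ys zs
  have "sum_seqs3 n (\<lambda>ss ys zs. if zs ! k = z then path_prob e n ss ys zs else 0)
      = sum_seqs3 n (\<lambda>ss ys zs. path_prob e n ss ys zs * h (take (Suc k) ss) (take (Suc k) ys) (take (Suc k) zs))"
    using assms by (intro sum_seqs3_cong) (simp add: h_def)
  also have "\<dots> = sum_seqs3 (Suc k) (\<lambda>ss ys zs. path_prob e (Suc k) ss ys zs * h ss ys zs)"
    using assms by (intro sum_seqs3_path_prob_prefix) simp
  also have "\<dots> = sum_seqs3 k (\<lambda>ss ys zs. \<Sum>s\<in>UNIV. \<Sum>y\<in>UNIV. \<Sum>z'\<in>UNIV.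
      if z' = z then path_prob e k ss ys zs * (Q s * W (e k ss) s y z') else 0)"
    unfolding sum_seqs3_Suc by (intro sum_seqs3_cong sum.cong refl) (simp add: path_prob_snoc h_def nth_append)
  also have "\<dots> = sum_seqs3 k (\<lambda>ss ys zs. path_prob e k ss ys zs * WZ (e k ss) z)"
    unfolding WZ_def by (intro sum_seqs3_cong) (simp add: sum_distrib_left mult.assoc)
  also have "\<dots> = (\<Sum>x\<in>UNIV. input_pmf e k x * WZ x z)"
    by (rule sum_seqs3_path_prob_input)
  finally show ?thesis .
qed

lemma warden_dist_nonneg: "0 \<le> warden_dist W Q N n enc zs"
  unfolding warden_dist_def code_joint_eq by (intro sum_nonneg divide_nonneg_nonneg path_prob_nonneg) auto

lemma warden_marginal:
  assumes "k < n"
  shows "marginal n (warden_dist W Q N n enc) k z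
    = (\<Sum>m\<in>{1..N}. \<Sum>x\<in>UNIV. input_pmf (\<lambda>i. enc i m) k x * WZ x z) / N"
proof -
  let ?f = "\<lambda>m ss ys zs. if zs ! k = z then path_prob (\<lambda>i. enc i m) n ss ys zs else 0"
  have "marginal n (warden_dist W Q N n enc) k z
      = (\<Sum>zs\<in>seqs n. \<Sum>m\<in>{1..N}. \<Sum>ss\<in>seqs n. \<Sum>ys\<in>seqs n. ?f m ss ys zs / N)"
    unfolding marginal_eq warden_dist_def code_joint_eq by (intro sum.cong refl) auto
  also have "\<dots> = (\<Sum>m\<in>{1..N}. \<Sum>zs\<in>seqs n. \<Sum>ss\<in>seqs n. \<Sum>ys\<in>seqs n. ?f m ss ys zs / N)"
    by (rule sum.swap)
  also have "\<dots> = (\<Sum>m\<in>{1..N}. sum_seqs3 n (?f m) / N)"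
    unfolding sum_seqs3_def sum_divide_distrib
    by (intro sum.cong refl) (subst sum.swap, rule sum.cong[OF refl], rule sum.swap)
  finally show ?thesis
    using assms by (simp add: sum_seqs3_path_prob_nth sum_divide_distrib)
qed

lemma warden_marginal_pmf:
  assumes "k < n" and "1 \<le> N"
  shows "is_pmf_on UNIV (marginal n (warden_dist W Q N n enc) k)"
proof -
  have "0 \<le> marginal n (warden_dist W Q N n enc) k z" for z
    unfolding marginal_def by (intro sum_nonneg warden_dist_nonneg)
  moreover have "(\<Sum>z\<in>UNIV. \<Sum>m\<in>{1..N}. \<Sum>x\<in>UNIV. input_pmf (\<lambda>i. enc i m) k x * WZ x z)
      = (\<Sum>m\<in>{1..N}. \<Sum>x\<in>UNIV. input_pmf (\<lambda>i. enc i m) k x * sum (WZ x) UNIV)"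
    unfolding sum_distrib_left by (subst sum.swap) (rule sum.cong[OF refl], rule sum.swap)
  then have "sum (marginal n (warden_dist W Q N n enc) k) UNIV = 1"
    using assms input_pmf by (simp add: warden_marginal sum_divide_distrib[symmetric] sum_WZ is_pmf_on_def)
  ultimately show ?thesis
    by (simp add: is_pmf_on_def)
qed

lemma Q0_prod_eq_iid: "Q0_prod W Q x0 n = iid (WZ x0) n"
  by (rule ext) (simp add: Q0_prod_def iid_def Q0_eq_WZ)

lemma code_covert_bound:
  assumes "1 \<le> n" and "1 \<le> N" and WZ_pos: "\<And>z. 0 < WZ x0 z"
  shows "\<bar>(\<Sum>x\<in>UNIV. avg_input N n enc x * WZ x z) - WZ x0 z\<bar>
    \<le> 2 * sqrt (kl_div (seqs n) (warden_dist W Q N n enc) (Q0_prod W Q x0 n))"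
proof -
  define KL where "KL = kl_div (seqs n) (warden_dist W Q N n enc) (Q0_prod W Q x0 n)"
  let ?marg = "\<lambda>k. marginal n (warden_dist W Q N n enc) k"
  have marg_close: "\<bar>?marg k z - WZ x0 z\<bar> \<le> 2 * sqrt KL" if "k < n" for k
  proof -
    have "\<bar>?marg k z - WZ x0 z\<bar> \<le> 2 * sqrt (kl_div UNIV (?marg k) (WZ x0))"
      using warden_marginal_pmf[OF that assms(2)] WZ_pmf WZ_pos by (rule pmf_diff_le_kl_div)
    also have "kl_div UNIV (?marg k) (WZ x0) \<le> KL"
      unfolding KL_def Q0_prod_eq_iid using warden_dist_nonneg WZ_pos sum_WZ that
      by (rule kl_div_marginal_le)
    finally show ?thesis
      by simp
  qed
  have "(\<Sum>k<n. ?marg k z) = (\<Sum>k<n. \<Sum>m\<in>{1..N}. \<Sum>x\<in>UNIV. input_pmf (\<lambda>i. enc i m) k x * WZ x z) / N"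
    by (simp add: warden_marginal sum_divide_distrib)
  also have "\<dots> = (\<Sum>m\<in>{1..N}. \<Sum>k<n. \<Sum>x\<in>UNIV. input_pmf (\<lambda>i. enc i m) k x * WZ x z) / N"
    by (subst sum.swap) (rule refl)
  finally have avg_eq: "(\<Sum>x\<in>UNIV. avg_input N n enc x * WZ x z) = (\<Sum>k<n. ?marg k z) / n"
    using sum_input_pmf_eq_avg_input[OF assms(2,1), where g = "\<lambda>x. WZ x z"] assms(1,2)
    by (simp add: field_simps)
  have "\<bar>(\<Sum>k<n. ?marg k z) / n - WZ x0 z\<bar> = \<bar>\<Sum>k<n. ?marg k z - WZ x0 z\<bar> / n"
    using assms(1) by (simp add: sum_subtractf field_simps)
  also have "\<dots> \<le> (\<Sum>k<n. \<bar>?marg k z - WZ x0 z\<bar>) / n"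
    by (intro divide_right_mono sum_abs) simp
  also have "\<dots> \<le> (\<Sum>k<n. 2 * sqrt KL) / n"
    by (intro divide_right_mono sum_mono marg_close) auto
  also have "\<dots> = 2 * sqrt KL"
    using assms(1) by simp
  finally show ?thesis
    unfolding avg_eq KL_def .
qed

section \<open>Achievable rates and the rate set\<close>

lemma num_msgs_rate_bound:
  fixes enc :: "nat \<Rightarrow> nat \<Rightarrow> 's list \<Rightarrow> 'x" and dec :: "'y list \<Rightarrow> nat"
  assumes "1 \<le> n" and pe_le: "error_prob W Q (num_msgs R n) n enc dec \<le> 1"
  shows "(1 - error_prob W Q (num_msgs R n) n enc dec) * R - 6 / n \<le> chan_info (avg_input (num_msgs R n) n enc)"
proof -
  let ?pe = "error_prob W Q (num_msgs R n) n enc dec"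
  have "(1 - ?pe) * (n * R) \<le> (1 - ?pe) * log 2 (num_msgs R n)"
    using pe_le mult_le_log_num_msgs[of n R] by (intro mult_left_mono) simp_all
  then have "n * ((1 - ?pe) * R - 6 / n) \<le> n * chan_info (avg_input (num_msgs R n) n enc)"
    using code_rate_bound[OF assms(1) num_msgs_ge_1[of R n], where enc = enc and dec = dec] assms(1) by (simp add: algebra_simps)
  then show ?thesis
    using assms(1) by simp
qed

lemma achievable_rate_le:
  assumes WZ_pos: "\<And>z. 0 < WZ x0 z" and "covert_achievable_SCT W Q x0 R"
  shows "\<exists>p\<in>covert_inputs x0. R \<le> chan_info p"
proof -
  obtain enc dec where
    pe: "(\<lambda>n. error_prob W Q (num_msgs R n) n (enc n) (dec n)) \<longlonglongrightarrow> 0" and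
    kl: "(\<lambda>n. kl_div (seqs n) (warden_dist W Q (num_msgs R n) n (enc n)) (Q0_prod W Q x0 n)) \<longlonglongrightarrow> 0"
    using assms(2) unfolding covert_achievable_SCT_def by blast
  let ?pe = "\<lambda>n. error_prob W Q (num_msgs R (Suc n)) (Suc n) (enc (Suc n)) (dec (Suc n))"
  define p where "p n = avg_input (num_msgs R (Suc n)) (Suc n) (enc (Suc n))" for n
  show ?thesis
  proof (rule covert_limit)
    show "is_pmf_on UNIV (p n)" for n
      unfolding p_def by (intro avg_input_pmf num_msgs_ge_1) simp
    show "(\<lambda>n. \<Sum>x\<in>UNIV. p n x * WZ x z) \<longlonglongrightarrow> WZ x0 z" for z
    proof (rule LIM_zero_cancel, rule Lim_null_comparison)
      let ?kl = "\<lambda>n. kl_div (seqs (Suc n)) (warden_dist W Q (num_msgs R (Suc n)) (Suc n) (enc (Suc n)))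
        (Q0_prod W Q x0 (Suc n))"
      have "\<bar>(\<Sum>x\<in>UNIV. p n x * WZ x z) - WZ x0 z\<bar> \<le> 2 * sqrt (?kl n)" for n
        unfolding p_def by (rule code_covert_bound[OF _ num_msgs_ge_1 WZ_pos]) simp
      then show "\<forall>\<^sub>F n in sequentially. norm ((\<Sum>x\<in>UNIV. p n x * WZ x z) - WZ x0 z) \<le> 2 * sqrt (?kl n)"
        by simp
      show "(\<lambda>n. 2 * sqrt (?kl n)) \<longlonglongrightarrow> 0"
        using tendsto_mult[OF tendsto_const[of 2] tendsto_real_sqrt[OF LIMSEQ_Suc[OF kl]]] by simp
    qed
    show "\<forall>\<^sub>F n in sequentially. (1 - ?pe n) * R - 6 / Suc n \<le> chan_info (p n)"
      using order_tendstoD(2)[OF LIMSEQ_Suc[OF pe] zero_less_one]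
    proof eventually_elim
      case (elim n)
      then show ?case
        unfolding p_def by (intro num_msgs_rate_bound) simp_all
    qed
    have "(\<lambda>n. 6 / real (Suc n)) \<longlonglongrightarrow> 0"
      by real_asymp
    then have "(\<lambda>n. (1 - ?pe n) * R - 6 / Suc n) \<longlonglongrightarrow> (1 - 0) * R - 0"
      by (intro tendsto_intros LIMSEQ_Suc[OF pe])
    then show "(\<lambda>n. (1 - ?pe n) * R - 6 / Suc n) \<longlonglongrightarrow> R"
      by simp
  qed
qed

lemma covert_achievable_zero: "covert_achievable_SCT W Q x0 0"
proof -
  define enc :: "nat \<Rightarrow> nat \<Rightarrow> nat \<Rightarrow> 's list \<Rightarrow> 'x" where "enc n i m ss = x0" for n i m ss
  define dec :: "nat \<Rightarrow> 'y list \<Rightarrow> nat" where "dec n ys = 1" for n ys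
  have one_msg: "num_msgs 0 n = 1" for n
    by (simp add: num_msgs_def)
  have "warden_dist W Q 1 n (enc n) zs = Q0_prod W Q x0 n zs" for n zs
  proof -
    have "warden_dist W Q 1 n (enc n) zs = (\<Sum>ss\<in>seqs n. \<Sum>ys\<in>seqs n. \<Prod>i<n. Q (ss ! i) * W x0 (ss ! i) (ys ! i) (zs ! i))"
      unfolding warden_dist_def code_joint_eq path_prob_def enc_def by simp
    also have "\<dots> = (\<Sum>ss\<in>seqs n. \<Prod>i<n. \<Sum>y\<in>UNIV. Q (ss ! i) * W x0 (ss ! i) y (zs ! i))"
      by (intro sum.cong refl) (rule sum_seqs_prod[where f = "\<lambda>i y. Q (_ ! i) * W x0 (_ ! i) y (zs ! i)"])
    also have "\<dots> = (\<Prod>i<n. \<Sum>s\<in>UNIV. \<Sum>y\<in>UNIV. Q s * W x0 s y (zs ! i))"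
      by (rule sum_seqs_prod[where f = "\<lambda>i s. \<Sum>y\<in>UNIV. Q s * W x0 s y (zs ! i)"])
    finally show ?thesis
      unfolding Q0_prod_eq_iid iid_def WZ_def sum_distrib_left .
  qed
  then have "kl_div (seqs n) (warden_dist W Q (num_msgs 0 n) n (enc n)) (Q0_prod W Q x0 n) = 0" for n
    by (simp add: one_msg kl_div_def cong: if_cong)
  moreover have "error_prob W Q (num_msgs 0 n) n (enc n) (dec n) = 0" for n
    by (simp add: one_msg error_prob_def dec_def)
  ultimately show ?thesis
    unfolding covert_achievable_SCT_def by (intro conjI exI[of _ enc] exI[of _ dec]) simp_all
qed

definition aux_mixture :: "(nat \<Rightarrow> real) \<Rightarrow> (nat \<Rightarrow> 'x \<Rightarrow> real) \<Rightarrow> 'x \<Rightarrow> real"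
  where "aux_mixture PV PXV x = (\<Sum>v\<in>aux_alph TYPE('x). PV v * PXV v x)"

lemma P_XY_eq: "P_XY W Q PV PXV x y = aux_mixture PV PXV x * WY x y"
proof -
  have "P_XY W Q PV PXV x y
      = (\<Sum>v\<in>aux_alph TYPE('x). \<Sum>s\<in>UNIV. \<Sum>z\<in>UNIV. PV v * PXV v x * (Q s * W x s y z))"
    unfolding P_XY_def joint_SVXYZ_def by (subst sum.swap) (simp add: algebra_simps)
  then show ?thesis
    unfolding aux_mixture_def WY_def sum_distrib_right by (simp add: sum_distrib_left mult.assoc)
qed

lemma P_VZ_eq: "P_VZ W Q PV PXV v z = PV v * (\<Sum>x\<in>UNIV. PXV v x * WZ x z)"
proof -
  have "P_VZ W Q PV PXV v z = (\<Sum>x\<in>UNIV. \<Sum>s\<in>UNIV. \<Sum>y\<in>UNIV. PV v * (PXV v x * (Q s * W x s y z)))"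
    unfolding P_VZ_def joint_SVXYZ_def by (subst sum.swap) (simp add: algebra_simps)
  then show ?thesis
    unfolding WZ_def by (simp add: sum_distrib_left)
qed

lemma P_Z_eq: "P_Z W Q PV PXV z = (\<Sum>x\<in>UNIV. aux_mixture PV PXV x * WZ x z)"
  unfolding P_Z_def P_VZ_eq aux_mixture_def
  by (simp add: sum_distrib_left sum_distrib_right algebra_simps) (rule sum.swap)

lemma mutual_info_P_XY: "mutual_info UNIV UNIV (P_XY W Q PV PXV) = chan_info (aux_mixture PV PXV)"
  unfolding chan_info_def P_XY_eq ..

lemma aux_mixture_covert:
  assumes "in_D_SCT W Q x0 PV PXV"
  shows "aux_mixture PV PXV \<in> covert_inputs x0"
proof -
  have PV: "\<And>v. v \<in> aux_alph TYPE('x) \<Longrightarrow> 0 \<le> PV v" "sum PV (aux_alph TYPE('x)) = 1"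
    and PXV: "\<And>v. v \<in> aux_alph TYPE('x) \<Longrightarrow> is_pmf_on UNIV (PXV v)"
    and "\<And>z. P_Z W Q PV PXV z = Q0 W Q x0 z"
    using assms by (auto simp: in_D_SCT_def is_pmf_on_def)
  have "0 \<le> aux_mixture PV PXV x" for x
    unfolding aux_mixture_def using PV PXV by (intro sum_nonneg mult_nonneg_nonneg) (auto simp: is_pmf_on_def)
  moreover have "sum (aux_mixture PV PXV) UNIV = 1"
    unfolding aux_mixture_def using PV PXV
    by (subst sum.swap) (simp add: sum_distrib_left[symmetric] is_pmf_on_def)
  moreover have "(\<Sum>x\<in>UNIV. aux_mixture PV PXV x * WZ x z) = WZ x0 z" for z
    using \<open>P_Z W Q PV PXV z = Q0 W Q x0 z\<close> by (simp add: P_Z_eq Q0_eq_WZ)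
  ultimately show ?thesis
    by (simp add: covert_inputs_def is_pmf_on_def)
qed

text \<open>A covert input distribution is realised with a deterministic auxiliary variable \<open>V = 0\<close>,
  which leaks nothing to the warden, so the constraint \<open>I(X;Y) \<ge> I(V;Z)\<close> is automatic.\<close>
lemma covert_input_in_D_SCT:
  assumes p: "p \<in> covert_inputs x0"
  shows "in_D_SCT W Q x0 (\<lambda>v. if v = 0 then 1 else 0) (\<lambda>_. p)"
    and "aux_mixture (\<lambda>v. if v = 0 then 1 else 0) (\<lambda>_. p) = p"
proof -
  let ?PV = "\<lambda>v::nat. if v = 0 then 1 else (0::real)"
  have "0 \<in> aux_alph TYPE('x)" and "finite (aux_alph TYPE('x))"
    by (simp_all add: aux_alph_def)
  have p_pmf: "is_pmf_on UNIV p" and p_out: "\<And>z. (\<Sum>x\<in>UNIV. p x * WZ x z) = WZ x0 z"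
    using p by (auto simp: covert_inputs_def)
  show mix: "aux_mixture ?PV (\<lambda>_. p) = p"
    using \<open>0 \<in> aux_alph TYPE('x)\<close> \<open>finite (aux_alph TYPE('x))\<close>
    by (simp add: aux_mixture_def fun_eq_iff if_distrib[of "\<lambda>t. t * _"] cong: if_cong)
  have PVZ: "P_VZ W Q ?PV (\<lambda>_. p) v z = ?PV v * WZ x0 z" for v z
    by (simp add: P_VZ_eq p_out)
  have no_leak: "mutual_info (aux_alph TYPE('x)) UNIV (P_VZ W Q ?PV (\<lambda>_. p)) = 0"
    using \<open>0 \<in> aux_alph TYPE('x)\<close> \<open>finite (aux_alph TYPE('x))\<close>
    unfolding mutual_info_def PVZ
    by (intro sum.neutral ballI) (simp add: sum_distrib_left[symmetric] sum_distrib_right[symmetric] sum_WZ)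
  show "in_D_SCT W Q x0 ?PV (\<lambda>_. p)"
    unfolding in_D_SCT_def
  proof (intro conjI ballI allI)
    show "is_pmf_on (aux_alph TYPE('x)) ?PV"
      using \<open>0 \<in> aux_alph TYPE('x)\<close> \<open>finite (aux_alph TYPE('x))\<close> by (simp add: is_pmf_on_def)
    show "is_pmf_on UNIV p"
      by (rule p_pmf)
    show "P_Z W Q ?PV (\<lambda>_. p) z = Q0 W Q x0 z" for z
      by (simp only: P_Z_eq mix p_out Q0_eq_WZ)
    show "mutual_info (aux_alph TYPE('x)) UNIV (P_VZ W Q ?PV (\<lambda>_. p))
        \<le> mutual_info UNIV UNIV (P_XY W Q ?PV (\<lambda>_. p))"
      using chan_info_nonneg[OF p_pmf] by (simp only: no_leak mutual_info_P_XY mix)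
  qed
qed

lemma rate_set_SCT_eq: "rate_set_SCT W Q x0 = {R. 0 \<le> R \<and> (\<exists>p\<in>covert_inputs x0. R \<le> chan_info p)}"
proof (intro set_eqI iffI; clarsimp)
  fix R
  assume "R \<in> rate_set_SCT W Q x0"
  then obtain PV PXV where "0 \<le> R" and "in_D_SCT W Q x0 PV PXV"
    and "R \<le> chan_info (aux_mixture PV PXV)"
    by (auto simp: rate_set_SCT_def mutual_info_P_XY)
  then show "0 \<le> R \<and> (\<exists>p\<in>covert_inputs x0. R \<le> chan_info p)"
    using aux_mixture_covert by blast
next
  fix R p
  assume "0 \<le> R" and "p \<in> covert_inputs x0" and "R \<le> chan_info p"
  let ?PV = "\<lambda>v::nat. if v = 0 then 1 else (0::real)"
  have "in_D_SCT W Q x0 ?PV (\<lambda>_. p)" and "R \<le> mutual_info UNIV UNIV (P_XY W Q ?PV (\<lambda>_. p))"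
    using covert_input_in_D_SCT[OF \<open>p \<in> covert_inputs x0\<close>] \<open>R \<le> chan_info p\<close>
    by (simp_all add: mutual_info_P_XY)
  then show "R \<in> rate_set_SCT W Q x0"
    unfolding rate_set_SCT_def using \<open>0 \<le> R\<close> by blast
qed

lemma covert_capacity_SCT_le:
  assumes "\<And>z. 0 < WZ x0 z" and "\<And>q. q \<in> covert_inputs x0 \<Longrightarrow> chan_info q \<le> c"
  shows "covert_capacity_SCT W Q x0 \<le> c"
  unfolding covert_capacity_SCT_def
proof (rule cSup_least)
  show "{R. covert_achievable_SCT W Q x0 R} \<noteq> {}"
    using covert_achievable_zero by blast
  fix R
  assume "R \<in> {R. covert_achievable_SCT W Q x0 R}"
  then obtain q where "q \<in> covert_inputs x0" and "R \<le> chan_info q"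
    using achievable_rate_le[OF assms(1)] by blast
  then show "R \<le> c"
    using assms(2)[of q] by linarith
qed

lemma rate_set_SCT_max:
  assumes "p \<in> covert_inputs x0" and "\<And>q. q \<in> covert_inputs x0 \<Longrightarrow> chan_info q \<le> chan_info p"
  shows "chan_info p \<in> rate_set_SCT W Q x0" and "\<And>r. r \<in> rate_set_SCT W Q x0 \<Longrightarrow> r \<le> chan_info p"
proof -
  show "chan_info p \<in> rate_set_SCT W Q x0"
    using assms(1) chan_info_nonneg[of p] unfolding rate_set_SCT_eq covert_inputs_def by blast
  fix r
  assume "r \<in> rate_set_SCT W Q x0"
  then obtain q where "q \<in> covert_inputs x0" and "r \<le> chan_info q"
    unfolding rate_set_SCT_eq by blast
  then show "r \<le> chan_info p"
    using assms(2)[of q] by linarith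
qed

end

lemma state_channelI:
  assumes W: "\<And>x s. is_pmf_on UNIV (\<lambda>(y, z). W x s y z)" and Q: "is_pmf_on UNIV Q"
  shows "state_channel W Q"
proof
  show "0 \<le> W x s y z" for x s y z
    using W[of x s] unfolding is_pmf_on_def by (metis UNIV_I case_prod_conv)
  show "(\<Sum>y\<in>UNIV. \<Sum>z\<in>UNIV. W x s y z) = 1" for x s
    using W[of x s] unfolding is_pmf_on_def UNIV_Times_UNIV[symmetric] sum.cartesian_product' by simp
  show "0 \<le> Q s" for s
    using Q by (simp add: is_pmf_on_def)
  show "sum Q UNIV = 1"
    using Q by (simp add: is_pmf_on_def)
qed

theorem theorem12:
  fixes W :: "'x::finite \<Rightarrow> 's::finite \<Rightarrow> 'y::finite \<Rightarrow> 'z::finite \<Rightarrow> real"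
    and Q :: "'s \<Rightarrow> real"
    and x0 :: 'x
  assumes W_pmf: "\<And>x s. is_pmf_on UNIV (\<lambda>(y, z). W x s y z)"
    and Q_pmf: "is_pmf_on UNIV Q"
    and Q0_full: "\<And>z. Q0 W Q x0 z > 0"
  shows "(\<exists>r\<in>rate_set_SCT W Q x0. \<forall>r'\<in>rate_set_SCT W Q x0. r' \<le> r)
    \<and> covert_capacity_SCT W Q x0 \<le> (GREATEST r. r \<in> rate_set_SCT W Q x0)"
proof -
  interpret state_channel W Q
    using W_pmf Q_pmf by (rule state_channelI)
  obtain p where p: "p \<in> covert_inputs x0" and p_max: "\<And>q. q \<in> covert_inputs x0 \<Longrightarrow> chan_info q \<le> chan_info p"
    using chan_info_attains_max by blast
  note max_rate = rate_set_SCT_max[OF p p_max]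
  then have "(GREATEST r. r \<in> rate_set_SCT W Q x0) = chan_info p"
    by (rule Greatest_equality)
  moreover have "covert_capacity_SCT W Q x0 \<le> chan_info p"
    using Q0_full p_max by (intro covert_capacity_SCT_le) (simp_all add: Q0_eq_WZ)
  ultimately show ?thesis
    using max_rate by auto
qed

end
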